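(* A graph $G$ can be explained by a labeled level-1 network if and only if every induced subgraph of $G$ can be explained by a labeled level-1 network.
   Context: Graphs finite, simple, undirected. Network on finite $X$: a DAG $N=(V,E)$ with either $V=X=\{x\}$, or (N1) unique root of indegree 0, outdegree $\ge2$; (N2) $x\in X$ iff outdegree 0, indegree 1; (N3) every other non-root vertex has indegree 1 and outdegree $\ge2$, or indegree 2 (hybrid-vertex) and outdegree $\ge1$. Level-1: every biconnected component of the underlying undirected graph contains at most one hybrid-vertex; then the lowest common ancestor $\mathrm{lca}_N(x,y)$ (the minimal common ancestor w.r.t. the ancestor order) is unique. Labeled network: $t:V\to\{0,1,\odot\}$, $t(v)=\odot$ iff $v\in X$; it explains $G$ if $G$ is isomorphic to the graph on $X$ with $x\ne y$ adjacent iff $t(\mathrm{lca}_N(x,y))=1$. *)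

theory Defs
  imports Main
begin

definition simple_graph :: "'a set \<Rightarrow> ('a \<times> 'a) set \<Rightarrow> bool" where
  "simple_graph V E \<longleftrightarrow> finite V \<and> E \<subseteq> V \<times> V \<and> sym E \<and> irrefl E"

definition induced_subgraph_edges :: "('a \<times> 'a) set \<Rightarrow> 'a set \<Rightarrow> ('a \<times> 'a) set" where
  "induced_subgraph_edges E W = E \<inter> (W \<times> W)"

definition indeg :: "('v \<times> 'v) set \<Rightarrow> 'v \<Rightarrow> nat" where
  "indeg A v = card {u. (u, v) \<in> A}"

definition outdeg :: "('v \<times> 'v) set \<Rightarrow> 'v \<Rightarrow> nat" where
  "outdeg A v = card {w. (v, w) \<in> A}"

definition is_dag :: "'v set \<Rightarrow> ('v \<times> 'v) set \<Rightarrow> bool" where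
  "is_dag NV A \<longleftrightarrow> finite NV \<and> A \<subseteq> NV \<times> NV \<and> acyclic A"

definition hybrid :: "('v \<times> 'v) set \<Rightarrow> 'v \<Rightarrow> bool" where
  "hybrid A v \<longleftrightarrow> indeg A v = 2"

definition network :: "'v set \<Rightarrow> ('v \<times> 'v) set \<Rightarrow> 'v set \<Rightarrow> bool" where
  "network NV A X \<longleftrightarrow> is_dag NV A \<and> X \<subseteq> NV \<and>
     ((\<exists>x. NV = {x} \<and> X = {x}) \<or>
      ((\<exists>!r. r \<in> NV \<and> indeg A r = 0) \<and>
       (\<forall>r\<in>NV. indeg A r = 0 \<longrightarrow> outdeg A r \<ge> 2) \<and>
       (\<forall>v\<in>NV. v \<in> X \<longleftrightarrow> outdeg A v = 0 \<and> indeg A v = 1) \<and>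
       (\<forall>v\<in>NV. indeg A v \<noteq> 0 \<and> v \<notin> X \<longrightarrow>
           (indeg A v = 1 \<and> outdeg A v \<ge> 2) \<or> (indeg A v = 2 \<and> outdeg A v \<ge> 1))))"

definition undirected :: "('v \<times> 'v) set \<Rightarrow> ('v \<times> 'v) set" where
  "undirected A = A \<union> A\<inverse>"

definition connected_on :: "('v \<times> 'v) set \<Rightarrow> 'v set \<Rightarrow> bool" where
  "connected_on U S \<longleftrightarrow> (\<forall>x\<in>S. \<forall>y\<in>S. (x, y) \<in> (U \<inter> (S \<times> S))\<^sup>*)"

definition biconnected_on :: "('v \<times> 'v) set \<Rightarrow> 'v set \<Rightarrow> bool" where
  "biconnected_on U C \<longleftrightarrow> card C \<ge> 2 \<and> connected_on U C \<and>
     (\<forall>v\<in>C. connected_on U (C - {v}))"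

definition biconnected_component :: "'v set \<Rightarrow> ('v \<times> 'v) set \<Rightarrow> 'v set \<Rightarrow> bool" where
  "biconnected_component NV U C \<longleftrightarrow> C \<subseteq> NV \<and> biconnected_on U C \<and>
     (\<forall>D. C \<subset> D \<and> D \<subseteq> NV \<longrightarrow> \<not> biconnected_on U D)"

definition level1 :: "'v set \<Rightarrow> ('v \<times> 'v) set \<Rightarrow> bool" where
  "level1 NV A \<longleftrightarrow> (\<forall>C. biconnected_component NV (undirected A) C \<longrightarrow>
     card {v\<in>C. hybrid A v} \<le> 1)"

definition ancestor :: "('v \<times> 'v) set \<Rightarrow> 'v \<Rightarrow> 'v \<Rightarrow> bool" where
  "ancestor A u v \<longleftrightarrow> (u, v) \<in> A\<^sup>*"

definition common_ancestor :: "'v set \<Rightarrow> ('v \<times> 'v) set \<Rightarrow> 'v \<Rightarrow> 'v \<Rightarrow> 'v \<Rightarrow> bool" where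
  "common_ancestor NV A x y u \<longleftrightarrow> u \<in> NV \<and> ancestor A u x \<and> ancestor A u y"

definition is_lca :: "'v set \<Rightarrow> ('v \<times> 'v) set \<Rightarrow> 'v \<Rightarrow> 'v \<Rightarrow> 'v \<Rightarrow> bool" where
  "is_lca NV A x y u \<longleftrightarrow> common_ancestor NV A x y u \<and>
     (\<forall>w. common_ancestor NV A x y w \<and> ancestor A u w \<longrightarrow> w = u)"

definition lca :: "'v set \<Rightarrow> ('v \<times> 'v) set \<Rightarrow> 'v \<Rightarrow> 'v \<Rightarrow> 'v" where
  "lca NV A x y = (THE u. is_lca NV A x y u)"

datatype label = Zero | One | Odot

definition labeling :: "'v set \<Rightarrow> 'v set \<Rightarrow> ('v \<Rightarrow> label) \<Rightarrow> bool" where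
  "labeling NV X t \<longleftrightarrow> (\<forall>v\<in>NV. t v = Odot \<longleftrightarrow> v \<in> X)"

definition explains :: "'v set \<Rightarrow> ('v \<times> 'v) set \<Rightarrow> 'v set \<Rightarrow> ('v \<Rightarrow> label)
     \<Rightarrow> 'a set \<Rightarrow> ('a \<times> 'a) set \<Rightarrow> bool" where
  "explains NV A X t V E \<longleftrightarrow> (\<exists>f. bij_betw f V X \<and>
     (\<forall>a\<in>V. \<forall>b\<in>V. (a, b) \<in> E \<longleftrightarrow> f a \<noteq> f b \<and> t (lca NV A (f a) (f b)) = One))"

text \<open>G can be explained by a labeled level-1 network.  Network vertices are taken
  from nat; every finite network is isomorphic to one on nat.\<close>
definition level1_explainable :: "'a set \<Rightarrow> ('a \<times> 'a) set \<Rightarrow> bool" where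
  "level1_explainable V E \<longleftrightarrow> (\<exists>(NV :: nat set) A X t.
     network NV A X \<and> level1 NV A \<and> labeling NV X t \<and> explains NV A X t V E)"

end

theory Submission
  imports Defs
begin

text \<open>Only the forward direction needs work. Given a labeled level-1 network explaining \<open>G\<close>
  and a set \<open>W\<close> of at least two vertices, restrict the network to the ancestors of the leaves
  representing \<open>W\<close>. This keeps the lowest common ancestors of these leaves and the level-1
  property, but may create a root of outdegree one and vertices of in- and outdegree one.
  These are suppressed one by one, by deleting the root or by replacing a path
  \<open>q \<rightarrow> v \<rightarrow> c\<close> with an arc \<open>q \<rightarrow> c\<close>; neither changes ancestry among the remaining
  vertices, hence lowest common ancestors and labels. Level-1 survives because a biconnected
  set through the new arc becomes biconnected in the old network after subdividing the arc
  by \<open>v\<close>, unless it is just \<open>{q, c}\<close>; and \<open>q\<close>, \<open>c\<close> cannot both be hybrid, as they lie on a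
  common cycle. Single vertices are explained by the one-vertex network.\<close>

section \<open>Undirected connectivity\<close>

lemma sym_undirected: "sym (undirected A)"
  unfolding undirected_def sym_def by auto

lemma connected_onI_hub:
  assumes "sym U" and hub: "\<forall>x\<in>T. (h, x) \<in> (U \<inter> T \<times> T)\<^sup>*"
  shows "connected_on U T"
  unfolding connected_on_def
proof (intro ballI)
  fix x y assume "x \<in> T" "y \<in> T"
  then have "(h, x) \<in> (U \<inter> T \<times> T)\<^sup>*" "(h, y) \<in> (U \<inter> T \<times> T)\<^sup>*" using hub by auto
  moreover have "sym (U \<inter> T \<times> T)" using \<open>sym U\<close> unfolding sym_def by auto
  ultimately show "(x, y) \<in> (U \<inter> T \<times> T)\<^sup>*"
    by (metis rtrancl_trans sym_rtrancl symD)
qed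

lemma connected_on_mono:
  assumes "connected_on U T" "U \<inter> T \<times> T \<subseteq> U'"
  shows "connected_on U' T"
proof -
  have "U \<inter> T \<times> T \<subseteq> U' \<inter> T \<times> T" using assms(2) by auto
  then show ?thesis using assms(1) rtrancl_mono unfolding connected_on_def by blast
qed

lemma connected_on_cong:
  assumes "\<forall>x\<in>S. \<forall>y\<in>S. (x, y) \<in> U \<longleftrightarrow> (x, y) \<in> U'"
  shows "connected_on U S = connected_on U' S"
proof -
  have "U \<inter> S \<times> S = U' \<inter> S \<times> S" using assms by auto
  then show ?thesis unfolding connected_on_def by simp
qed

lemma biconnected_on_cong:
  assumes "\<forall>x\<in>C. \<forall>y\<in>C. (x, y) \<in> U \<longleftrightarrow> (x, y) \<in> U'"
  shows "biconnected_on U C = biconnected_on U' C"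
proof -
  have "connected_on U S = connected_on U' S" if "S \<subseteq> C" for S
    using assms that connected_on_cong by (metis subsetD)
  then show ?thesis unfolding biconnected_on_def by (metis Diff_subset order_refl)
qed

lemma connected_on_rtrancl:
  assumes "connected_on U S" "\<forall>x\<in>S. \<forall>y\<in>S. (x, y) \<in> U \<longrightarrow> (x, y) \<in> R\<^sup>*"
    "x \<in> S" "y \<in> S"
  shows "(x, y) \<in> R\<^sup>*"
proof -
  have "(x, y) \<in> (U \<inter> S \<times> S)\<^sup>*" using assms unfolding connected_on_def by auto
  moreover have "U \<inter> S \<times> S \<subseteq> R\<^sup>*" using assms(2) by auto
  ultimately show ?thesis by (metis rtrancl_subset_rtrancl subsetD)
qed

lemma connected_on_rtrancl_Restr:
  assumes "connected_on U T" "T \<subseteq> T'" "x \<in> T" "y \<in> T"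
  shows "(x, y) \<in> (U \<inter> T' \<times> T')\<^sup>*"
proof -
  have "(x, y) \<in> (U \<inter> T \<times> T)\<^sup>*" using assms(1,3,4) unfolding connected_on_def by blast
  moreover have "U \<inter> T \<times> T \<subseteq> U \<inter> T' \<times> T'" using assms(2) by blast
  ultimately show ?thesis using rtrancl_mono by blast
qed

lemma biconnected_on_finite: "biconnected_on U C \<Longrightarrow> finite C"
  unfolding biconnected_on_def by (metis card.infinite not_numeral_le_zero)

lemma connected_on_insert:
  assumes "sym U" "connected_on U T" "h \<in> T" "(h, v) \<in> U"
  shows "connected_on U (insert v T)"
proof (rule connected_onI_hub[OF \<open>sym U\<close>, of _ h], intro ballI)
  fix x assume "x \<in> insert v T"
  then show "(h, x) \<in> (U \<inter> insert v T \<times> insert v T)\<^sup>*"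
  proof
    assume "x = v" then show ?thesis using assms(3,4) by blast
  next
    assume "x \<in> T"
    then show ?thesis using connected_on_rtrancl_Restr[OF assms(2) _ assms(3)] by blast
  qed
qed

lemma connected_on_from_deletions:
  assumes "sym U" "connected_on U (C - {q})" "connected_on U (C - {c})"
    and "q \<in> C" "c \<in> C" "q \<noteq> c" "w \<in> C - {q, c}"
  shows "connected_on U C"
proof (rule connected_onI_hub[OF \<open>sym U\<close>, of _ c], intro ballI)
  have minus_q: "(x, y) \<in> (U \<inter> C \<times> C)\<^sup>*" if "x \<in> C - {q}" "y \<in> C - {q}" for x y
    using connected_on_rtrancl_Restr[OF assms(2) _ that] by blast
  have minus_c: "(x, y) \<in> (U \<inter> C \<times> C)\<^sup>*" if "x \<in> C - {c}" "y \<in> C - {c}" for x y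
    using connected_on_rtrancl_Restr[OF assms(3) _ that] by blast
  fix x assume "x \<in> C"
  show "(c, x) \<in> (U \<inter> C \<times> C)\<^sup>*"
  proof (cases "x = q")
    case True
    have "(c, w) \<in> (U \<inter> C \<times> C)\<^sup>*" using minus_q[of c w] assms(5-7) by auto
    moreover have "(w, q) \<in> (U \<inter> C \<times> C)\<^sup>*" using minus_c[of w q] assms(4,6,7) by auto
    ultimately show ?thesis using True by (metis rtrancl_trans)
  next
    case False
    then show ?thesis using minus_q[of c x] \<open>x \<in> C\<close> assms(5,6) by auto
  qed
qed

text \<open>\<open>U'\<close> is the graph before subdividing the edge \<open>{q, c}\<close> by the vertex \<open>v\<close>, \<open>U\<close> the one after.\<close>

lemma connected_on_subdivide:
  assumes "sym U" and U': "\<forall>x\<in>T. \<forall>y\<in>T. (x, y) \<in> U' \<longrightarrow> (x, y) \<in> U \<or> {x, y} = {q, c}"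
    and v: "(q, v) \<in> U" "(v, c) \<in> U"
    and "connected_on U' T" "q \<in> T" "c \<in> T"
  shows "connected_on U (insert v T)"
proof (rule connected_onI_hub[OF \<open>sym U\<close>, of _ q], intro ballI)
  let ?R = "U \<inter> insert v T \<times> insert v T"
  have vU: "(v, q) \<in> U" "(c, v) \<in> U" using v \<open>sym U\<close> unfolding sym_def by auto
  have edges: "\<forall>a\<in>T. \<forall>b\<in>T. (a, b) \<in> U' \<longrightarrow> (a, b) \<in> ?R\<^sup>*"
  proof (intro ballI impI)
    fix a b assume ab: "a \<in> T" "b \<in> T" "(a, b) \<in> U'"
    have "(a, b) \<in> U \<or> {a, b} = {q, c}" using U' ab by blast
    then consider "(a, b) \<in> U" | "a = q" "b = c" | "a = c" "b = q"
      unfolding doubleton_eq_iff by blast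
    then show "(a, b) \<in> ?R\<^sup>*"
    proof cases
      case 1 then show ?thesis using ab by auto
    next
      case 2
      then have "(a, v) \<in> ?R" "(v, b) \<in> ?R" using v ab by auto
      then show ?thesis by (meson r_into_rtrancl rtrancl_into_rtrancl)
    next
      case 3
      then have "(a, v) \<in> ?R" "(v, b) \<in> ?R" using vU ab by auto
      then show ?thesis by (meson r_into_rtrancl rtrancl_into_rtrancl)
    qed
  qed
  have T: "(q, x) \<in> ?R\<^sup>*" if "x \<in> T" for x
    using connected_on_rtrancl[OF \<open>connected_on U' T\<close> edges \<open>q \<in> T\<close> that] .
  fix x assume "x \<in> insert v T"
  then show "(q, x) \<in> ?R\<^sup>*"
  proof
    assume "x = v"
    then have "(q, x) \<in> ?R" using v(1) \<open>q \<in> T\<close> by simp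
    then show ?thesis by (rule r_into_rtrancl)
  qed (rule T)
qed

lemma biconnected_on_subdivide:
  assumes "sym U" and bic: "biconnected_on U' C" and card: "3 \<le> card C"
    and qc: "q \<in> C" "c \<in> C" "q \<noteq> c" and v: "v \<notin> C" "(q, v) \<in> U" "(v, c) \<in> U"
    and U': "\<forall>x\<in>C. \<forall>y\<in>C. (x, y) \<in> U' \<longrightarrow> (x, y) \<in> U \<or> {x, y} = {q, c}"
  shows "biconnected_on U (insert v C)"
proof -
  have vU: "(v, q) \<in> U" "(c, v) \<in> U" using v \<open>sym U\<close> unfolding sym_def by auto
  have remC: "\<And>w. w \<in> C \<Longrightarrow> connected_on U' (C - {w})"
    using bic unfolding biconnected_on_def by auto
  have finC: "finite C" using bic by (rule biconnected_on_finite)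
  \<comment> \<open>the subdivided edge does not live on a vertex set missing \<open>q\<close> or \<open>c\<close>\<close>
  have avoid: "connected_on U (C - {w})" if "w \<in> {q, c}" for w
  proof (rule connected_on_mono[OF remC])
    show "w \<in> C" using that qc by auto
    show "U' \<inter> (C - {w}) \<times> (C - {w}) \<subseteq> U"
      using U' that by (auto simp: doubleton_eq_iff)
  qed
  have subdiv: "connected_on U (insert v (C - {w}))" if w: "w \<in> C - {q, c}" for w
  proof (rule connected_on_subdivide[OF \<open>sym U\<close> _ v(2,3)])
    show "connected_on U' (C - {w})" using remC w by blast
    show "q \<in> C - {w}" "c \<in> C - {w}" using qc w by auto
  qed (use U' in blast)
  obtain w where "w \<in> C - {q, c}"
  proof -
    have "\<not> C \<subseteq> {q, c}"
    proof
      assume "C \<subseteq> {q, c}"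
      then have "card C \<le> card {q, c}" by (intro card_mono) simp_all
      then show False using card qc(3) by simp
    qed
    then show ?thesis using that by blast
  qed
  moreover have "connected_on U (C - {q})" "connected_on U (C - {c})" using avoid by simp_all
  ultimately have "connected_on U C" using connected_on_from_deletions[OF \<open>sym U\<close>] qc by blast
  then have "connected_on U (insert v C - {w})" if w: "w \<in> insert v C" for w
  proof -
    consider "w = v" | "w = q" | "w = c" | "w \<in> C - {q, c}" using w by blast
    then show ?thesis
    proof cases
      case 1 then show ?thesis using \<open>connected_on U C\<close> v(1) by simp
    next
      case 2
      then have "insert v C - {w} = insert v (C - {q})" using v(1) qc by auto
      then show ?thesis using connected_on_insert[OF \<open>sym U\<close> avoid[of q] _ vU(2)] qc by simp
    next
      case 3
      then have "insert v C - {w} = insert v (C - {c})" using v(1) qc by auto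
      then show ?thesis using connected_on_insert[OF \<open>sym U\<close> avoid[of c] _ v(2)] qc by simp
    next
      case 4
      then have "insert v C - {w} = insert v (C - {w})" using v(1) by auto
      then show ?thesis using subdiv[OF 4] by simp
    qed
  qed
  moreover have "connected_on U (insert v C)"
    using connected_on_subdivide[OF \<open>sym U\<close> U' v(2,3) _ qc(1,2)] bic
    unfolding biconnected_on_def by blast
  moreover have "2 \<le> card (insert v C)" using card finC v(1) by simp
  ultimately show ?thesis unfolding biconnected_on_def by blast
qed

section \<open>Level-1 as a condition on all biconnected vertex sets\<close>

text \<open>Every biconnected vertex set lies in a maximal one, so for finite networks this is
  equivalent to \<open>level1\<close>; unlike \<open>level1\<close>, it is inherited by subgraphs.\<close>

definition level1_sets :: "'v set \<Rightarrow> ('v \<times> 'v) set \<Rightarrow> bool" where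
  "level1_sets NV A \<longleftrightarrow>
     (\<forall>C. C \<subseteq> NV \<and> biconnected_on (undirected A) C \<longrightarrow> card {v\<in>C. hybrid A v} \<le> 1)"

lemma level1_imp_level1_sets:
  assumes "finite NV" "level1 NV A"
  shows "level1_sets NV A"
  unfolding level1_sets_def
proof (intro allI impI)
  fix C assume C: "C \<subseteq> NV \<and> biconnected_on (undirected A) C"
  let ?D = "{D. C \<subseteq> D \<and> D \<subseteq> NV \<and> biconnected_on (undirected A) D}"
  have "?D \<subseteq> Pow NV" by auto
  then have fin: "finite ?D" by (rule finite_subset) (simp add: assms(1))
  have ne: "?D \<noteq> {}" using C by auto
  obtain D where D: "D \<in> ?D" "\<forall>D'\<in>?D. D \<le> D' \<longrightarrow> D = D'"
    using finite_has_maximal[OF fin ne] by blast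
  have "biconnected_component NV (undirected A) D"
    unfolding biconnected_component_def
  proof (intro conjI allI impI)
    show "D \<subseteq> NV" "biconnected_on (undirected A) D" using D(1) by auto
    fix D' assume "D \<subset> D' \<and> D' \<subseteq> NV"
    then show "\<not> biconnected_on (undirected A) D'" using D by auto
  qed
  then have "card {v\<in>D. hybrid A v} \<le> 1" using assms(2) unfolding level1_def by auto
  moreover have "finite D" using D(1) biconnected_on_finite[of "undirected A" D] by simp
  then have "card {v\<in>C. hybrid A v} \<le> card {v\<in>D. hybrid A v}"
    using D(1) by (intro card_mono) auto
  ultimately show "card {v\<in>C. hybrid A v} \<le> 1" by simp
qed

lemma level1_sets_imp_level1: "level1_sets NV A \<Longrightarrow> level1 NV A"
  unfolding level1_sets_def level1_def biconnected_component_def by simp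

lemma level1_sets_subgraph:
  assumes "level1_sets NV A" "NV' \<subseteq> NV"
    and "\<forall>x\<in>NV'. \<forall>y\<in>NV'. (x, y) \<in> undirected A' \<longleftrightarrow> (x, y) \<in> undirected A"
    and "\<forall>v\<in>NV'. hybrid A' v \<longrightarrow> hybrid A v"
  shows "level1_sets NV' A'"
  unfolding level1_sets_def
proof (intro allI impI)
  fix C assume C: "C \<subseteq> NV' \<and> biconnected_on (undirected A') C"
  have "\<forall>x\<in>C. \<forall>y\<in>C. (x, y) \<in> undirected A' \<longleftrightarrow> (x, y) \<in> undirected A"
    using assms(3) C by blast
  then have "biconnected_on (undirected A) C"
    using biconnected_on_cong[of C "undirected A'" "undirected A"] C by blast
  then have "card {v\<in>C. hybrid A v} \<le> 1" using assms(1,2) C unfolding level1_sets_def by blast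
  moreover have "finite C" using C biconnected_on_finite[of "undirected A'" C] by simp
  then have "card {v\<in>C. hybrid A' v} \<le> card {v\<in>C. hybrid A v}"
    using C assms(4) by (intro card_mono) auto
  ultimately show "card {v\<in>C. hybrid A' v} \<le> 1" by simp
qed

lemma level1_sets_delete_vertex:
  assumes "level1_sets NV A" "A \<subseteq> NV \<times> NV" "finite NV" "\<forall>u\<in>NV. indeg A u \<le> 2"
  shows "level1_sets (NV - {v}) (A \<inter> (NV - {v}) \<times> (NV - {v}))"
proof (rule level1_sets_subgraph[OF assms(1)])
  show "NV - {v} \<subseteq> NV" by blast
  show "\<forall>x\<in>NV - {v}. \<forall>y\<in>NV - {v}.
      (x, y) \<in> undirected (A \<inter> (NV - {v}) \<times> (NV - {v})) \<longleftrightarrow> (x, y) \<in> undirected A"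
    unfolding undirected_def by auto
  show "\<forall>u\<in>NV - {v}. hybrid (A \<inter> (NV - {v}) \<times> (NV - {v})) u \<longrightarrow> hybrid A u"
  proof (intro ballI impI)
    fix u assume u: "u \<in> NV - {v}" "hybrid (A \<inter> (NV - {v}) \<times> (NV - {v})) u"
    have "{x. (x, u) \<in> A \<inter> (NV - {v}) \<times> (NV - {v})} = {x. (x, u) \<in> A} - {v}"
      using u(1) assms(2) by auto
    then have "card ({x. (x, u) \<in> A} - {v}) = 2" using u(2) unfolding hybrid_def indeg_def by simp
    moreover have "{x. (x, u) \<in> A} \<subseteq> NV" using assms(2) by auto
    then have "finite {x. (x, u) \<in> A}" using assms(3) finite_subset by blast
    then have "card ({x. (x, u) \<in> A} - {v}) \<le> indeg A u" unfolding indeg_def by (intro card_mono) auto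
    moreover have "indeg A u \<le> 2" using assms(4) u(1) by blast
    ultimately show "hybrid A u" unfolding hybrid_def by linarith
  qed
qed

fun dpath :: "('v \<times> 'v) set \<Rightarrow> 'v list \<Rightarrow> bool" where
  "dpath A [] = True"
| "dpath A [x] = True"
| "dpath A (x # y # xs) \<longleftrightarrow> (x, y) \<in> A \<and> dpath A (y # xs)"

lemma dpath_append:
  "dpath A (xs @ ys) \<longleftrightarrow>
     dpath A xs \<and> dpath A ys \<and> (xs \<noteq> [] \<longrightarrow> ys \<noteq> [] \<longrightarrow> (last xs, hd ys) \<in> A)"
proof (induction xs)
  case (Cons x xs) then show ?case by (cases xs; cases ys) auto
qed simp

lemma dpath_Cons_tl: "dpath A (x # xs) \<Longrightarrow> dpath A xs"
  by (cases xs) simp_all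

lemma dpath_rtrancl:
  assumes "dpath A P" "set P \<subseteq> T" "x \<in> set P"
  shows "(hd P, x) \<in> (A \<inter> T \<times> T)\<^sup>* \<and> (x, last P) \<in> (A \<inter> T \<times> T)\<^sup>*"
  using assms
proof (induction A P arbitrary: x rule: dpath.induct)
  case (3 A u y xs)
  then have IH: "\<And>x. x \<in> set (y # xs) \<Longrightarrow>
      (y, x) \<in> (A \<inter> T \<times> T)\<^sup>* \<and> (x, last (y # xs)) \<in> (A \<inter> T \<times> T)\<^sup>*"
    by simp
  have e: "(u, y) \<in> A \<inter> T \<times> T" using 3 by simp
  have ly: "(y, last (y # xs)) \<in> (A \<inter> T \<times> T)\<^sup>*" using IH[of y] by simp
  have l: "last (u # y # xs) = last (y # xs)" "hd (u # y # xs) = u" by simp_all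
  show ?case
  proof (cases "x = u")
    case True
    then show ?thesis using l converse_rtrancl_into_rtrancl[OF e ly] by (metis rtrancl.rtrancl_refl)
  next
    case False
    then have "x \<in> set (y # xs)" using 3 by simp
    then show ?thesis using IH l converse_rtrancl_into_rtrancl[OF e] by metis
  qed
qed simp_all

lemma rtrancl_imp_dpath:
  assumes "(a, b) \<in> A\<^sup>*"
  obtains P where "P \<noteq> []" "hd P = a" "last P = b" "dpath A P"
proof -
  have "\<exists>P. P \<noteq> [] \<and> hd P = a \<and> last P = b \<and> dpath A P"
    using assms
  proof (induction rule: rtrancl_induct)
    case base
    show ?case by (intro exI[of _ "[a]"]) simp
  next
    case (step y z)
    then obtain P where P: "P \<noteq> []" "hd P = a" "last P = y" "dpath A P" by blast
    then have "dpath A (P @ [z])" using step by (simp add: dpath_append)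
    then show ?case using P by (intro exI[of _ "P @ [z]"]) simp
  qed
  then show ?thesis using that by blast
qed

lemma dpath_trancl: "dpath A (x # xs) \<Longrightarrow> y \<in> set xs \<Longrightarrow> (x, y) \<in> A\<^sup>+"
proof (induction xs arbitrary: x)
  case (Cons u xs)
  then have "(x, u) \<in> A" "dpath A (u # xs)" by simp_all
  then show ?case using Cons by (metis set_ConsD trancl.r_into_trancl trancl_into_trancl2)
qed simp

lemma dpath_distinct: "acyclic A \<Longrightarrow> dpath A P \<Longrightarrow> distinct P"
proof (induction P)
  case (Cons x xs)
  have "dpath A xs" using Cons.prems(2) by (rule dpath_Cons_tl)
  moreover have "x \<notin> set xs" using dpath_trancl[OF Cons.prems(2)] Cons.prems(1)
    unfolding acyclic_def by blast
  ultimately show ?case using Cons.IH Cons.prems(1) by simp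
qed simp

lemma split_list_last_in:
  assumes "set P \<inter> B \<noteq> {}"
  obtains xs z ys where "P = xs @ z # ys" "z \<in> B" "set ys \<inter> B = {}"
proof -
  have "\<exists>xs z ys. P = xs @ z # ys \<and> z \<in> B \<and> set ys \<inter> B = {}"
    using assms
  proof (induction P rule: rev_induct)
    case (snoc x xs)
    show ?case
    proof (cases "x \<in> B")
      case True then show ?thesis by (intro exI[of _ xs] exI[of _ x] exI[of _ "[]"]) simp
    next
      case False
      then have "set xs \<inter> B \<noteq> {}" using snoc.prems by auto
      then obtain as z ys where "xs = as @ z # ys" "z \<in> B" "set ys \<inter> B = {}"
        using snoc.IH by blast
      then show ?thesis using False by (intro exI[of _ as] exI[of _ z] exI[of _ "ys @ [x]"]) simp
    qed
  qed simp
  then obtain xs z ys where "P = xs @ z # ys" "z \<in> B" "set ys \<inter> B = {}" by blast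
  then show ?thesis by (rule that)
qed

lemma dpath_reach:
  assumes "dpath A P" "x \<in> set P"
  shows "(hd P, x) \<in> A\<^sup>* \<and> (x, last P) \<in> A\<^sup>*"
  using dpath_rtrancl[OF assms(1) subset_UNIV assms(2)] by simp

lemma rtrancl_closed:
  assumes "A \<subseteq> NV \<times> NV" "r \<in> NV" "(r, x) \<in> A\<^sup>*"
  shows "x \<in> NV"
proof (cases "r = x")
  case False
  then have "(r, x) \<in> A\<^sup>+" using assms(3) by (simp add: rtrancl_eq_or_trancl)
  then show ?thesis using trancl_subset_Sigma[OF assms(1)] by blast
qed (use assms(2) in simp)

lemma acyclic_arc_not_back: "acyclic A \<Longrightarrow> (x, y) \<in> A \<Longrightarrow> (y, x) \<in> A\<^sup>* \<Longrightarrow> False"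
  unfolding acyclic_def by (meson rtrancl_into_trancl2)

lemma rtrancl_unique_child:
  assumes "{w. (v, w) \<in> A} = {c}" "(v, x) \<in> A\<^sup>*" "x \<noteq> v"
  shows "(c, x) \<in> A\<^sup>*"
proof -
  have "(v, x) \<in> A\<^sup>+" using assms(2,3) by (simp add: rtrancl_eq_or_trancl)
  then obtain w where w: "(v, w) \<in> A" "(w, x) \<in> A\<^sup>*" by (meson tranclD)
  then have "w = c" using assms(1) by blast
  then show ?thesis using w(2) by simp
qed

abbreviation ureach :: "('v \<times> 'v) set \<Rightarrow> 'v set \<Rightarrow> ('v \<times> 'v) set" where
  "ureach A T \<equiv> (undirected A \<inter> T \<times> T)\<^sup>*"

lemma rtrancl_imp_ureach:
  assumes "(x, y) \<in> (A \<inter> T \<times> T)\<^sup>*"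
  shows "(x, y) \<in> ureach A T \<and> (y, x) \<in> ureach A T"
proof -
  have "A \<inter> T \<times> T \<subseteq> undirected A \<inter> T \<times> T" unfolding undirected_def by auto
  then have "(A \<inter> T \<times> T)\<^sup>* \<subseteq> ureach A T" by (rule rtrancl_mono)
  then have xy: "(x, y) \<in> ureach A T" using assms by blast
  have "sym (undirected A \<inter> T \<times> T)" using sym_undirected[of A] unfolding sym_def by blast
  then have "sym (ureach A T)" by (rule sym_rtrancl)
  then have "(y, x) \<in> ureach A T" using xy by (rule symD)
  with xy show ?thesis by blast
qed

lemma ureach_arc:
  assumes "(a, b) \<in> A" "a \<in> T" "b \<in> T"
  shows "(a, b) \<in> ureach A T \<and> (b, a) \<in> ureach A T"
proof -
  have "(a, b) \<in> A \<inter> T \<times> T" using assms by simp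
  then have "(a, b) \<in> (A \<inter> T \<times> T)\<^sup>*" by (rule r_into_rtrancl)
  then show ?thesis by (rule rtrancl_imp_ureach)
qed

lemma ureach_dpath:
  assumes "dpath A P" "set P \<subseteq> T" "x \<in> set P"
  shows "(hd P, x) \<in> ureach A T \<and> (x, hd P) \<in> ureach A T \<and>
    (last P, x) \<in> ureach A T \<and> (x, last P) \<in> ureach A T"
proof -
  have a: "(hd P, x) \<in> (A \<inter> T \<times> T)\<^sup>*" and b: "(x, last P) \<in> (A \<inter> T \<times> T)\<^sup>*"
    using dpath_rtrancl[OF assms] by simp_all
  show ?thesis using rtrancl_imp_ureach[OF a] rtrancl_imp_ureach[OF b] by simp
qed

section \<open>Biconnected sets through a vertex of in- and outdegree one\<close>

text \<open>Two directed paths from \<open>z\<close> that share only \<open>z\<close> and both continue into \<open>c\<close> form a cycle.\<close>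

lemma connected_on_theta_minus:
  assumes P: "dpath A P" "P \<noteq> []" "hd P = z" "distinct P"
    and Q: "dpath A Q" "Q \<noteq> []" "hd Q = z" "distinct Q"
    and PQ: "set P \<inter> set Q = {z}"
    and c: "(last P, c) \<in> A" "(last Q, c) \<in> A" "c \<notin> set P" "c \<notin> set Q"
    and w: "w \<in> set P" "w \<noteq> z"
  shows "connected_on (undirected A) ((set P \<union> set Q \<union> {c}) - {w})"
proof -
  let ?T = "(set P \<union> set Q \<union> {c}) - {w}"
  obtain xs ys where sp: "P = xs @ w # ys" using w(1) by (meson split_list)
  have xsne: "xs \<noteq> []" using sp P(3) w(2) by auto
  have hxs: "hd xs = z" using sp P(3) xsne by simp
  have dxs: "distinct (xs @ w # ys)" using P(4) sp by simp
  have wxs: "w \<notin> set xs" and wys: "w \<notin> set ys" using dxs by auto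
  have wQ: "w \<notin> set Q" using PQ w sp by auto
  have wc: "w \<noteq> c" using c(3) w(1) by auto
  have pxs: "dpath A xs" and pwys: "dpath A (w # ys)"
    using P(1) sp dpath_append[of A xs "w # ys"] by simp_all
  have pys: "dpath A ys" using pwys by (rule dpath_Cons_tl)
  have sxs: "set xs \<subseteq> ?T" using wxs sp by auto
  have sys: "set ys \<subseteq> ?T" using wys sp by auto
  have sQ: "set Q \<subseteq> ?T" using wQ by auto
  have cT: "c \<in> ?T" using wc by auto
  have lQT: "last Q \<in> ?T" using sQ Q(2) last_in_set by blast
  have zc: "(z, c) \<in> ureach A ?T"
  proof -
    have "(hd Q, last Q) \<in> ureach A ?T" using ureach_dpath[OF Q(1) sQ, of "last Q"] Q(2) by simp
    moreover have "(last Q, c) \<in> ureach A ?T" using ureach_arc[OF c(2) lQT cT] by simp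
    ultimately show ?thesis using Q(3) by (metis rtrancl_trans)
  qed
  have "\<forall>x\<in>?T. (z, x) \<in> ureach A ?T"
  proof
    fix x assume xT: "x \<in> ?T"
    then have "x \<in> set xs \<or> x \<in> set ys \<or> x \<in> set Q \<or> x = c" using sp by auto
    then show "(z, x) \<in> ureach A ?T"
    proof (elim disjE)
      assume "x \<in> set xs" then show ?thesis using ureach_dpath[OF pxs sxs] hxs by metis
    next
      assume "x \<in> set Q" then show ?thesis using ureach_dpath[OF Q(1) sQ] Q(3) by metis
    next
      assume "x = c" then show ?thesis using zc by simp
    next
      assume xys: "x \<in> set ys"
      then have ysne: "ys \<noteq> []" by auto
      then have lys: "last ys = last P" using sp by simp
      have lyT: "last P \<in> ?T" using lys ysne sys last_in_set by (metis subsetD)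
      have "(c, last P) \<in> ureach A ?T" using ureach_arc[OF c(1) lyT cT] by simp
      moreover have "(last P, x) \<in> ureach A ?T" using ureach_dpath[OF pys sys xys] lys by simp
      ultimately show ?thesis using zc by (metis rtrancl_trans)
    qed
  qed
  then show ?thesis by (rule connected_onI_hub[OF sym_undirected])
qed

lemma connected_on_theta_minus_source:
  assumes P: "dpath A P" "P \<noteq> []" "hd P = z" "distinct P"
    and Q: "dpath A Q" "Q \<noteq> []" "hd Q = z" "distinct Q"
    and c: "(last P, c) \<in> A" "(last Q, c) \<in> A" "c \<notin> set P"
  shows "connected_on (undirected A) ((set P \<union> set Q \<union> {c}) - {z})"
proof -
  let ?T = "(set P \<union> set Q \<union> {c}) - {z}"
  obtain P' where P': "P = z # P'" using P(2,3) by (cases P) auto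
  obtain Q' where Q': "Q = z # Q'" using Q(2,3) by (cases Q) auto
  have pP': "dpath A P'" using P(1) P' dpath_Cons_tl by simp
  have pQ': "dpath A Q'" using Q(1) Q' dpath_Cons_tl by simp
  have sP': "set P' \<subseteq> ?T" using P(4) P' by auto
  have sQ': "set Q' \<subseteq> ?T" using Q(4) Q' by auto
  have cT: "c \<in> ?T" using c(3) P' by auto
  have "\<forall>x\<in>?T. (c, x) \<in> ureach A ?T"
  proof
    fix x assume "x \<in> ?T"
    then have "x \<in> set P' \<or> x \<in> set Q' \<or> x = c" using P' Q' by auto
    then show "(c, x) \<in> ureach A ?T"
    proof (elim disjE)
      assume xP: "x \<in> set P'"
      then have ne: "P' \<noteq> []" by auto
      then have l: "last P' = last P" using P' by simp
      then have lT: "last P \<in> ?T" using ne sP' last_in_set by (metis subsetD)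
      have "(c, last P) \<in> ureach A ?T" using ureach_arc[OF c(1) lT cT] by simp
      moreover have "(last P, x) \<in> ureach A ?T" using ureach_dpath[OF pP' sP' xP] l by simp
      ultimately show ?thesis by (rule rtrancl_trans)
    next
      assume xQ: "x \<in> set Q'"
      then have ne: "Q' \<noteq> []" by auto
      then have l: "last Q' = last Q" using Q' by simp
      then have lT: "last Q \<in> ?T" using ne sQ' last_in_set by (metis subsetD)
      have "(c, last Q) \<in> ureach A ?T" using ureach_arc[OF c(2) lT cT] by simp
      moreover have "(last Q, x) \<in> ureach A ?T" using ureach_dpath[OF pQ' sQ' xQ] l by simp
      ultimately show ?thesis by (rule rtrancl_trans)
    qed simp
  qed
  then show ?thesis by (rule connected_onI_hub[OF sym_undirected])
qed

lemma biconnected_on_theta: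
  assumes P: "dpath A P" "P \<noteq> []" "hd P = z" "distinct P"
    and Q: "dpath A Q" "Q \<noteq> []" "hd Q = z" "distinct Q"
    and PQ: "set P \<inter> set Q = {z}"
    and c: "(last P, c) \<in> A" "(last Q, c) \<in> A" "c \<notin> set P" "c \<notin> set Q"
  shows "biconnected_on (undirected A) (set P \<union> set Q \<union> {c})"
proof -
  let ?S = "set P \<union> set Q \<union> {c}"
  have zP: "z \<in> set P" using P(2,3) by (metis list.set_sel(1))
  have zc: "z \<noteq> c" using zP c(3) by auto
  have card: "2 \<le> card ?S"
  proof -
    have "{z, c} \<subseteq> ?S" using zP by auto
    then have "card {z, c} \<le> card ?S" by (intro card_mono) simp_all
    then show ?thesis using zc by simp
  qed
  have from_z: "\<forall>x\<in>set P \<union> set Q. (z, x) \<in> ureach A T" if "set P \<subseteq> T" "set Q \<subseteq> T" for T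
  proof
    fix x assume "x \<in> set P \<union> set Q"
    then show "(z, x) \<in> ureach A T"
    proof
      assume "x \<in> set P" then show ?thesis using ureach_dpath[OF P(1) that(1)] P(3) by simp
    next
      assume "x \<in> set Q" then show ?thesis using ureach_dpath[OF Q(1) that(2)] Q(3) by simp
    qed
  qed
  have "connected_on (undirected A) ?S"
  proof -
    have sP: "set P \<subseteq> ?S" and sQ: "set Q \<subseteq> ?S" and cS: "c \<in> ?S" by auto
    have lQ: "last Q \<in> ?S" using Q(2) by simp
    have "(z, last Q) \<in> ureach A ?S" using from_z[OF sP sQ] lQ Q(2) by simp
    moreover have "(last Q, c) \<in> ureach A ?S" using ureach_arc[OF c(2) lQ cS] by simp
    ultimately have "(z, c) \<in> ureach A ?S" by (rule rtrancl_trans)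
    then have "\<forall>x\<in>?S. (z, x) \<in> ureach A ?S" using from_z[OF sP sQ] by blast
    then show ?thesis by (rule connected_onI_hub[OF sym_undirected])
  qed
  moreover have "connected_on (undirected A) (?S - {w})" if wS: "w \<in> ?S" for w
  proof -
    consider "w = c" | "w = z" | "w \<in> set P" "w \<noteq> z" | "w \<in> set Q" "w \<noteq> z" using wS by blast
    then show ?thesis
    proof cases
      case 1
      then have "?S - {w} = set P \<union> set Q" using c(3,4) by auto
      then have "\<forall>x\<in>?S - {w}. (z, x) \<in> ureach A (?S - {w})" using from_z[of "?S - {w}"] by simp
      then show ?thesis by (rule connected_onI_hub[OF sym_undirected])
    next
      case 2
      then show ?thesis using connected_on_theta_minus_source[OF P Q c(1-3)] by simp
    next
      case 3
      then show ?thesis by (intro connected_on_theta_minus[OF P Q PQ c])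
    next
      case 4
      have "set Q \<inter> set P = {z}" "set Q \<union> set P \<union> {c} = ?S" using PQ by blast+
      then show ?thesis using connected_on_theta_minus[OF Q P _ c(2,1,4,3) 4] by simp
    qed
  qed
  ultimately show ?thesis unfolding biconnected_on_def using card by blast
qed

text \<open>Two vertices reachable from \<open>r\<close> are the ends of two directed paths from a common
  vertex \<open>z\<close> that meet only in \<open>z\<close>: take \<open>z\<close> the last vertex on the path to \<open>a\<close> that lies on the
  path to \<open>b\<close>.\<close>

lemma dpaths_from_last_common_vertex:
  assumes "acyclic A" "(r, a) \<in> A\<^sup>*" "(r, b) \<in> A\<^sup>*"
  obtains z P Q where "dpath A P" "P \<noteq> []" "hd P = z" "last P = a" "distinct P"
    "dpath A Q" "Q \<noteq> []" "hd Q = z" "last Q = b" "distinct Q"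
    "set P \<inter> set Q = {z}" "(r, z) \<in> A\<^sup>*"
proof -
  obtain P1 where P1: "P1 \<noteq> []" "hd P1 = r" "last P1 = a" "dpath A P1"
    using assms(2) by (rule rtrancl_imp_dpath)
  obtain P2 where P2: "P2 \<noteq> []" "hd P2 = r" "last P2 = b" "dpath A P2"
    using assms(3) by (rule rtrancl_imp_dpath)
  have "r \<in> set P1 \<inter> set P2" using P1 P2 by (metis IntI list.set_sel(1))
  then have "set P1 \<inter> set P2 \<noteq> {}" by blast
  then obtain xs z ys where s1: "P1 = xs @ z # ys" "z \<in> set P2" "set ys \<inter> set P2 = {}"
    by (rule split_list_last_in)
  have "set P2 \<inter> {z} \<noteq> {}" using s1(2) by blast
  then obtain us z' ws where s2: "P2 = us @ z' # ws" "z' \<in> {z}" "set ws \<inter> {z} = {}"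
    by (rule split_list_last_in)
  then have s2': "P2 = us @ z # ws" "z \<notin> set ws" by auto
  have dP: "dpath A (z # ys)" using P1(4) s1(1) dpath_append[of A xs "z # ys"] by simp
  have dQ: "dpath A (z # ws)" using P2(4) s2'(1) dpath_append[of A us "z # ws"] by simp
  have "set (z # ys) \<inter> set (z # ws) = {z}"
  proof -
    have "set ws \<subseteq> set P2" using s2'(1) by auto
    then have "set ys \<inter> set ws = {}" using s1(3) by blast
    moreover have "z \<notin> set ys" using s1(2,3) by blast
    ultimately show ?thesis by auto
  qed
  moreover have "(r, z) \<in> A\<^sup>*" using dpath_reach[OF P1(4)] P1(2) s1(1) by simp
  moreover have "last (z # ys) = a" "last (z # ws) = b" using P1(3) s1(1) P2(3) s2'(1) by simp_all
  ultimately show ?thesis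
    using that[OF dP _ _ _ dpath_distinct[OF assms(1) dP] dQ _ _ _ dpath_distinct[OF assms(1) dQ]]
    by simp
qed

text \<open>If \<open>v\<close> has unique parent \<open>q\<close> and unique child \<open>c\<close>, and \<open>c\<close> has a second parent \<open>p\<close>, the
  paths from the last common ancestor of \<open>v\<close> and \<open>p\<close> close up at \<open>c\<close> into a cycle through \<open>q\<close>.\<close>

lemma biconnected_via_second_parent:
  assumes A: "A \<subseteq> NV \<times> NV" "acyclic A" "r \<in> NV"
    and reach: "(r, v) \<in> A\<^sup>*" "(r, p) \<in> A\<^sup>*"
    and q: "{u. (u, v) \<in> A} = {q}"
    and cv: "{w. (v, w) \<in> A} = {c}"
    and p: "(p, c) \<in> A" "p \<noteq> v"
  shows "\<exists>C \<subseteq> NV. biconnected_on (undirected A) C \<and> q \<in> C \<and> c \<in> C"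
proof -
  obtain z P Q where P: "dpath A P" "P \<noteq> []" "hd P = z" "last P = v" "distinct P"
    and Q: "dpath A Q" "Q \<noteq> []" "hd Q = z" "last Q = p" "distinct Q"
    and PQ: "set P \<inter> set Q = {z}" and z: "(r, z) \<in> A\<^sup>*"
    using dpaths_from_last_common_vertex[OF A(2) reach] by blast
  have vc: "(v, c) \<in> A" using cv by blast
  have below_P: "(x, v) \<in> A\<^sup>*" if "x \<in> set P" for x using dpath_reach[OF P(1) that] P(4) by simp
  have below_Q: "(x, p) \<in> A\<^sup>*" if "x \<in> set Q" for x using dpath_reach[OF Q(1) that] Q(4) by simp
  have cP: "c \<notin> set P" using below_P acyclic_arc_not_back[OF A(2) vc] by blast
  have cQ: "c \<notin> set Q" using below_Q acyclic_arc_not_back[OF A(2) p(1)] by blast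
  have "biconnected_on (undirected A) (set P \<union> set Q \<union> {c})"
    using biconnected_on_theta[OF P(1-3,5) Q(1-3,5) PQ _ _ cP cQ] P(4) Q(4) vc p(1) by simp
  moreover have "set P \<union> set Q \<union> {c} \<subseteq> NV"
  proof -
    have "x \<in> NV" if "x \<in> set P \<union> set Q" for x
    proof -
      have "(z, x) \<in> A\<^sup>*" using that dpath_reach[OF P(1)] dpath_reach[OF Q(1)] P(3) Q(3) by auto
      then show ?thesis using rtrancl_closed[OF A(1) A(3)] z by (meson rtrancl_trans)
    qed
    moreover have "c \<in> NV" using vc A(1) by blast
    ultimately show ?thesis by blast
  qed
  moreover have "q \<in> set P"
  proof -
    have "P \<noteq> [v]"
    proof
      assume "P = [v]"
      then have "(v, p) \<in> A\<^sup>*" using P(3) below_Q Q(2,3) by (metis list.sel(1) list.set_sel(1))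
      then have "(c, p) \<in> A\<^sup>*" using rtrancl_unique_child[OF cv] p(2) by blast
      then show False using acyclic_arc_not_back[OF A(2) p(1)] by blast
    qed
    then have "butlast P \<noteq> []" using P(2,4) by (metis append_butlast_last_id append_Nil)
    moreover have "dpath A (butlast P @ [v])" using P(1,2,4) by (metis append_butlast_last_id)
    ultimately have "(last (butlast P), v) \<in> A" using dpath_append[of A "butlast P" "[v]"] by simp
    then have "last (butlast P) = q" using q by blast
    moreover have "last (butlast P) \<in> set P" using \<open>butlast P \<noteq> []\<close> by (metis in_set_butlastD last_in_set)
    ultimately show ?thesis by simp
  qed
  ultimately show ?thesis by blast
qed

lemma level1_sets_not_both_hybrid:
  assumes lvl: "level1_sets NV A" and A: "A \<subseteq> NV \<times> NV" "acyclic A" "r \<in> NV"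
    and reach: "\<forall>x\<in>NV. (r, x) \<in> A\<^sup>*"
    and q: "{u. (u, v) \<in> A} = {q}"
    and cv: "{w. (v, w) \<in> A} = {c}"
  shows "\<not> (hybrid A q \<and> hybrid A c)"
proof
  assume h: "hybrid A q \<and> hybrid A c"
  have vc: "(v, c) \<in> A" and qv: "(q, v) \<in> A" using cv q by blast+
  have vNV: "v \<in> NV" using vc A(1) by auto
  have "\<not> {u. (u, c) \<in> A} \<subseteq> {v}"
  proof
    assume "{u. (u, c) \<in> A} \<subseteq> {v}"
    then have "card {u. (u, c) \<in> A} \<le> card {v}" by (intro card_mono) simp_all
    then show False using h unfolding hybrid_def indeg_def by simp
  qed
  then obtain p where p: "(p, c) \<in> A" "p \<noteq> v" by blast
  have pNV: "p \<in> NV" using p A(1) by auto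
  obtain C where C: "C \<subseteq> NV" "biconnected_on (undirected A) C" "q \<in> C" "c \<in> C"
    using biconnected_via_second_parent[OF A reach[rule_format, OF vNV] reach[rule_format, OF pNV] q cv p]
    by blast
  have "q \<noteq> c" using qv vc acyclic_arc_not_back[OF A(2)] by blast
  moreover have "finite C" using C(2) by (rule biconnected_on_finite)
  then have "card {q, c} \<le> card {x\<in>C. hybrid A x}" using C h by (intro card_mono) auto
  ultimately have "2 \<le> card {x\<in>C. hybrid A x}" by simp
  moreover have "card {x\<in>C. hybrid A x} \<le> 1" using lvl C unfolding level1_sets_def by blast
  ultimately show False by simp
qed

text \<open>Bypassing a vertex \<open>v\<close> with unique parent \<open>q\<close> and unique child \<open>c\<close> by an arc \<open>(q, c)\<close>:
  a biconnected set of the new network through \<open>q\<close> and \<open>c\<close> becomes biconnected in the old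
  one after adding \<open>v\<close> back, unless it is just \<open>{q, c}\<close>.\<close>

lemma level1_sets_bypass:
  assumes lvl: "level1_sets NV A" and A: "A \<subseteq> NV \<times> NV"
    and v: "v \<in> NV" "q \<noteq> v" "c \<noteq> v" "q \<noteq> c" "(q, v) \<in> A" "(v, c) \<in> A"
    and hyb: "\<forall>x\<in>NV - {v}. hybrid A' x \<longrightarrow> hybrid A x"
    and not_both: "\<not> (hybrid A q \<and> hybrid A c)"
    and A': "A' = A \<inter> (NV - {v}) \<times> (NV - {v}) \<union> {(q, c)}"
  shows "level1_sets (NV - {v}) A'"
  unfolding level1_sets_def
proof (intro allI impI)
  fix C assume C: "C \<subseteq> NV - {v} \<and> biconnected_on (undirected A') C"
  have finC: "finite C" using C biconnected_on_finite[of "undirected A'" C] by simp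
  have U': "(x, y) \<in> undirected A' \<longleftrightarrow> (x, y) \<in> undirected A \<or> {x, y} = {q, c}"
    if "x \<in> C" "y \<in> C" for x y
    using that C unfolding A' undirected_def doubleton_eq_iff by auto
  have fewer: "card {x\<in>C. hybrid A' x} \<le> card {x\<in>D. hybrid A x}" if "C \<subseteq> D" "finite D" for D
    using that hyb C by (intro card_mono) auto
  consider "\<not> (q \<in> C \<and> c \<in> C)" | "C = {q, c}" | "q \<in> C" "c \<in> C" "3 \<le> card C"
  proof -
    have "C = {q, c}" if "q \<in> C" "c \<in> C" "card C = 2"
    proof -
      have "{q, c} \<subseteq> C" "card {q, c} = card C" using that v(4) by simp_all
      then show ?thesis using card_subset_eq[OF finC] by blast
    qed
    moreover have "2 \<le> card C" using C unfolding biconnected_on_def by simp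
    ultimately show ?thesis using that by linarith
  qed
  then show "card {x\<in>C. hybrid A' x} \<le> 1"
  proof cases
    case 1
    have same: "\<forall>x\<in>C. \<forall>y\<in>C. (x, y) \<in> undirected A' \<longleftrightarrow> (x, y) \<in> undirected A"
    proof (intro ballI)
      fix x y assume xy: "x \<in> C" "y \<in> C"
      then have "{x, y} \<noteq> {q, c}" using 1 by (auto simp: doubleton_eq_iff)
      then show "(x, y) \<in> undirected A' \<longleftrightarrow> (x, y) \<in> undirected A" using U'[OF xy] by simp
    qed
    have "biconnected_on (undirected A) C" using biconnected_on_cong[OF same] C by simp
    then have "card {x\<in>C. hybrid A x} \<le> 1" using lvl C unfolding level1_sets_def by blast
    then show ?thesis using fewer[of C] finC by simp
  next
    case 2
    have "{x\<in>C. hybrid A x} \<subseteq> {q} \<or> {x\<in>C. hybrid A x} \<subseteq> {c}" using 2 not_both by auto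
    then have "card {x\<in>C. hybrid A x} \<le> 1"
    proof
      assume "{x\<in>C. hybrid A x} \<subseteq> {q}"
      then show ?thesis using card_mono[of "{q}"] by fastforce
    next
      assume "{x\<in>C. hybrid A x} \<subseteq> {c}"
      then show ?thesis using card_mono[of "{c}"] by fastforce
    qed
    then show ?thesis using fewer[of C] finC by simp
  next
    case 3
    have "v \<notin> C" using C by blast
    have "(q, v) \<in> undirected A" "(v, c) \<in> undirected A" using v(5,6) unfolding undirected_def by auto
    moreover have "\<forall>x\<in>C. \<forall>y\<in>C. (x, y) \<in> undirected A' \<longrightarrow> (x, y) \<in> undirected A \<or> {x, y} = {q, c}"
      using U' by blast
    moreover have "biconnected_on (undirected A') C" using C by simp
    ultimately have "biconnected_on (undirected A) (insert v C)"
      using biconnected_on_subdivide[OF sym_undirected _ 3(3) 3(1,2) v(4) \<open>v \<notin> C\<close>] by simp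
    moreover have "insert v C \<subseteq> NV" using C v(1) by blast
    ultimately have "card {x\<in>insert v C. hybrid A x} \<le> 1" using lvl unfolding level1_sets_def by blast
    moreover have "card {x\<in>C. hybrid A' x} \<le> card {x\<in>insert v C. hybrid A x}"
      using fewer[OF subset_insertI] finC by simp
    ultimately show ?thesis by simp
  qed
qed

section \<open>Networks with the same lowest common ancestors\<close>

definition same_lcas :: "'v set \<Rightarrow> ('v \<times> 'v) set \<Rightarrow> 'v set \<Rightarrow> ('v \<times> 'v) set \<Rightarrow> 'v set \<Rightarrow> bool" where
  "same_lcas NV A NV' A' X \<longleftrightarrow> (\<forall>x\<in>X. \<forall>y\<in>X. is_lca NV A x y = is_lca NV' A' x y)"

lemma same_lcas_refl: "same_lcas NV A NV A X"
  unfolding same_lcas_def by simp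

lemma same_lcas_trans:
  "same_lcas N1 A1 N2 A2 X \<Longrightarrow> same_lcas N2 A2 N3 A3 X \<Longrightarrow> same_lcas N1 A1 N3 A3 X"
  unfolding same_lcas_def by simp

lemma same_lcas_lca_eq:
  "same_lcas NV A NV' A' X \<Longrightarrow> x \<in> X \<Longrightarrow> y \<in> X \<Longrightarrow> lca NV' A' x y = lca NV A x y"
  unfolding same_lcas_def lca_def by simp

context
  fixes NV A NV' A' X
  assumes acyc: "acyclic A" and sub: "NV' \<subseteq> NV" "X \<subseteq> NV'"
    and anc: "\<forall>u\<in>NV'. \<forall>w\<in>NV'. (u, w) \<in> A\<^sup>* \<longleftrightarrow> (u, w) \<in> A'\<^sup>*"
    and rem: "\<forall>w\<in>NV - NV'. \<forall>x\<in>X. \<forall>y\<in>X. common_ancestor NV A x y w \<longrightarrow>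
              (\<exists>w'\<in>NV'. (w, w') \<in> A\<^sup>* \<and> common_ancestor NV A x y w')"
begin

lemma common_ancestor_restrict:
  "x \<in> X \<Longrightarrow> y \<in> X \<Longrightarrow> w \<in> NV' \<Longrightarrow> common_ancestor NV A x y w \<longleftrightarrow> common_ancestor NV' A' x y w"
  using anc sub unfolding common_ancestor_def ancestor_def by auto

lemma is_lca_restrict:
  assumes xy: "x \<in> X" "y \<in> X" and "is_lca NV A x y u"
  shows "is_lca NV' A' x y u"
proof -
  have cu: "common_ancestor NV A x y u"
    and mn: "\<And>w. common_ancestor NV A x y w \<Longrightarrow> (u, w) \<in> A\<^sup>* \<Longrightarrow> w = u"
    using assms(3) unfolding is_lca_def ancestor_def by auto
  have uN: "u \<in> NV'"
  proof (rule ccontr)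
    assume "u \<notin> NV'"
    moreover have "u \<in> NV" using cu unfolding common_ancestor_def by simp
    ultimately obtain w' where "w' \<in> NV'" "(u, w') \<in> A\<^sup>*" "common_ancestor NV A x y w'"
      using rem xy cu by blast
    then show False using mn \<open>u \<notin> NV'\<close> by blast
  qed
  show ?thesis
    unfolding is_lca_def
  proof (intro conjI allI impI)
    show "common_ancestor NV' A' x y u" using common_ancestor_restrict[OF xy uN] cu by simp
    fix w assume "common_ancestor NV' A' x y w \<and> ancestor A' u w"
    then have w: "common_ancestor NV' A' x y w" "(u, w) \<in> A'\<^sup>*" unfolding ancestor_def by auto
    have wN: "w \<in> NV'" using w(1) unfolding common_ancestor_def by simp
    have "common_ancestor NV A x y w" using common_ancestor_restrict[OF xy wN] w(1) by simp
    moreover have "(u, w) \<in> A\<^sup>*" using anc uN wN w(2) by blast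
    ultimately show "w = u" using mn by blast
  qed
qed

lemma is_lca_unrestrict:
  assumes xy: "x \<in> X" "y \<in> X" and "is_lca NV' A' x y u"
  shows "is_lca NV A x y u"
proof -
  have cu: "common_ancestor NV' A' x y u"
    and mn: "\<And>w. common_ancestor NV' A' x y w \<Longrightarrow> (u, w) \<in> A'\<^sup>* \<Longrightarrow> w = u"
    using assms(3) unfolding is_lca_def ancestor_def by auto
  have uN: "u \<in> NV'" using cu unfolding common_ancestor_def by simp
  show ?thesis
    unfolding is_lca_def
  proof (intro conjI allI impI)
    show "common_ancestor NV A x y u" using common_ancestor_restrict[OF xy uN] cu by simp
    fix w assume "common_ancestor NV A x y w \<and> ancestor A u w"
    then have w: "common_ancestor NV A x y w" "(u, w) \<in> A\<^sup>*" unfolding ancestor_def by auto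
    show "w = u"
    proof (cases "w \<in> NV'")
      case True
      then have "(u, w) \<in> A'\<^sup>*" using anc uN w(2) by blast
      then show ?thesis using mn common_ancestor_restrict[OF xy True] w(1) by blast
    next
      case False
      have "w \<in> NV" using w(1) unfolding common_ancestor_def by simp
      then obtain w' where w': "w' \<in> NV'" "(w, w') \<in> A\<^sup>*" "common_ancestor NV A x y w'"
        using rem xy w(1) False by blast
      have "(u, w') \<in> A\<^sup>*" using w(2) w'(2) by (rule rtrancl_trans)
      then have "(u, w') \<in> A'\<^sup>*" using anc uN w'(1) by blast
      then have "w' = u" using mn common_ancestor_restrict[OF xy w'(1)] w'(3) by blast
      then show ?thesis using antisymD[OF acyclic_impl_antisym_rtrancl[OF acyc] w(2)] w'(2) by simp
    qed
  qed
qed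

lemma same_lcas_restrict: "same_lcas NV A NV' A' X"
  unfolding same_lcas_def
  by (intro ballI ext iffI) (simp_all add: is_lca_restrict is_lca_unrestrict)

end

lemma rtrancl_bypass:
  assumes "(u, w) \<in> A\<^sup>*" "u \<noteq> v"
    and predv: "\<forall>x. (x, v) \<in> A \<longrightarrow> x = q" and succv: "\<forall>y. (v, y) \<in> A \<longrightarrow> y = c"
    and qc: "(q, c) \<in> A'\<^sup>*" and qv: "q \<noteq> v"
    and other: "\<forall>a b. (a, b) \<in> A \<longrightarrow> a \<noteq> v \<longrightarrow> b \<noteq> v \<longrightarrow> (a, b) \<in> A'"
  shows "(w \<noteq> v \<longrightarrow> (u, w) \<in> A'\<^sup>*) \<and> (w = v \<longrightarrow> (u, q) \<in> A'\<^sup>*)"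
  using assms(1)
proof (induction rule: rtrancl_induct)
  case base then show ?case using assms(2) by simp
next
  case (step w w')
  show ?case
  proof (cases "w' = v")
    case True
    then have "w = q" using predv step(2) by simp
    then show ?thesis using step(3) qv True by simp
  next
    case False
    show ?thesis
    proof (cases "w = v")
      case True
      then have "w' = c" using succv step(2) by simp
      then show ?thesis using step(3) True qc False by (meson rtrancl_trans)
    next
      case False2: False
      then have "(w, w') \<in> A'" using other step(2) \<open>w' \<noteq> v\<close> by simp
      then show ?thesis using step(3) False2 \<open>w' \<noteq> v\<close> by (meson rtrancl.rtrancl_into_rtrancl)
    qed
  qed
qed

lemma rtrancl_bypass_iff:
  assumes "A' \<subseteq> A\<^sup>*"
    and "\<forall>x. (x, v) \<in> A \<longrightarrow> x = q" "\<forall>y. (v, y) \<in> A \<longrightarrow> y = c"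
    and "(q, c) \<in> A'\<^sup>*" "q \<noteq> v"
    and "\<forall>a b. (a, b) \<in> A \<longrightarrow> a \<noteq> v \<longrightarrow> b \<noteq> v \<longrightarrow> (a, b) \<in> A'"
    and "u \<noteq> v" "w \<noteq> v"
  shows "(u, w) \<in> A\<^sup>* \<longleftrightarrow> (u, w) \<in> A'\<^sup>*"
proof
  assume "(u, w) \<in> A\<^sup>*"
  then show "(u, w) \<in> A'\<^sup>*" using rtrancl_bypass[OF _ assms(7,2-6)] assms(8) by blast
next
  assume "(u, w) \<in> A'\<^sup>*"
  then show "(u, w) \<in> A\<^sup>*" using rtrancl_subset_rtrancl[OF assms(1)] by blast
qed

lemma same_lcas_delete_vertex:
  assumes "acyclic A" "X \<subseteq> NV - {v}" "{w. (v, w) \<in> A} = {c}" "c \<in> NV" "c \<noteq> v"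
    and "\<forall>u\<in>NV - {v}. \<forall>w\<in>NV - {v}. (u, w) \<in> A\<^sup>* \<longleftrightarrow> (u, w) \<in> A'\<^sup>*"
  shows "same_lcas NV A (NV - {v}) A' X"
proof (rule same_lcas_restrict[OF assms(1) _ assms(2,6)])
  show "\<forall>w\<in>NV - (NV - {v}). \<forall>x\<in>X. \<forall>y\<in>X. common_ancestor NV A x y w \<longrightarrow>
      (\<exists>w'\<in>NV - {v}. (w, w') \<in> A\<^sup>* \<and> common_ancestor NV A x y w')"
  proof (intro ballI impI)
    fix w x y assume w: "w \<in> NV - (NV - {v})" and xy: "x \<in> X" "y \<in> X"
      and ca: "common_ancestor NV A x y w"
    have "w = v" "x \<noteq> v" "y \<noteq> v" using w xy assms(2) by auto
    then have "(c, x) \<in> A\<^sup>*" "(c, y) \<in> A\<^sup>*"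
      using ca rtrancl_unique_child[OF assms(3)] unfolding common_ancestor_def ancestor_def by auto
    then have "common_ancestor NV A x y c" using assms(4) unfolding common_ancestor_def ancestor_def by simp
    moreover have "(w, c) \<in> A\<^sup>*" using \<open>w = v\<close> assms(3) by blast
    ultimately show "\<exists>w'\<in>NV - {v}. (w, w') \<in> A\<^sup>* \<and> common_ancestor NV A x y w'"
      using assms(4,5) by blast
  qed
qed blast

section \<open>Pre-networks\<close>

text \<open>A level-1 network in which the root may have outdegree one and other vertices in- and
  outdegree one, as arises from restricting a network to the ancestors of some of its leaves.\<close>

locale pre_network =
  fixes NV :: "'v set" and A :: "('v \<times> 'v) set" and X :: "'v set" and r :: 'v
  assumes finite_vertices: "finite NV"
    and arcs: "A \<subseteq> NV \<times> NV"
    and acyclic_arcs: "acyclic A"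
    and root: "r \<in> NV"
    and indeg_root: "indeg A r = 0"
    and reach_from_root: "\<And>v. v \<in> NV \<Longrightarrow> (r, v) \<in> A\<^sup>*"
    and leaves: "X \<subseteq> NV"
    and leaf_iff_outdeg: "\<And>v. v \<in> NV \<Longrightarrow> v \<in> X \<longleftrightarrow> outdeg A v = 0"
    and indeg_leaf: "\<And>v. v \<in> X \<Longrightarrow> indeg A v = 1"
    and indeg_non_root: "\<And>v. v \<in> NV \<Longrightarrow> v \<noteq> r \<Longrightarrow> indeg A v = 1 \<or> indeg A v = 2"
    and level1_arcs: "level1_sets NV A"
begin

lemma finite_parents: "finite {u. (u, v) \<in> A}"
proof -
  have "{u. (u, v) \<in> A} \<subseteq> NV" using arcs by blast
  then show ?thesis using finite_vertices by (rule finite_subset)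
qed

lemma finite_children: "finite {w. (v, w) \<in> A}"
proof -
  have "{w. (v, w) \<in> A} \<subseteq> NV" using arcs by blast
  then show ?thesis using finite_vertices by (rule finite_subset)
qed

lemma indeg_le_2: "u \<in> NV \<Longrightarrow> indeg A u \<le> 2"
  using indeg_root indeg_non_root by (cases "u = r") fastforce+

lemma no_arc_into_root: "(u, r) \<notin> A"
  using indeg_root finite_parents[of r] unfolding indeg_def by simp

lemma root_unique: "u \<in> NV \<Longrightarrow> indeg A u = 0 \<Longrightarrow> u = r"
  using indeg_non_root by fastforce

lemma leaf_no_children: "v \<in> X \<Longrightarrow> (v, w) \<notin> A"
proof
  assume "v \<in> X" "(v, w) \<in> A"
  then have "card {w. (v, w) \<in> A} = 0" using leaf_iff_outdeg leaves unfolding outdeg_def by blast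
  then show False using finite_children[of v] \<open>(v, w) \<in> A\<close> by simp
qed

lemma root_not_leaf: "r \<notin> X"
  using indeg_leaf indeg_root by fastforce

lemma delete_root:
  assumes cX: "2 \<le> card X" and s: "{w. (r, w) \<in> A} = {c}"
  shows "pre_network (NV - {r}) (A \<inter> (NV - {r}) \<times> (NV - {r})) X c \<and>
    same_lcas NV A (NV - {r}) (A \<inter> (NV - {r}) \<times> (NV - {r})) X"
proof -
  let ?N = "NV - {r}" and ?A = "A \<inter> (NV - {r}) \<times> (NV - {r})"
  have rc: "(r, c) \<in> A" using s by blast
  have cN: "c \<in> NV" using rc arcs by blast
  have cr: "c \<noteq> r" using acyclic_arc_not_back[OF acyclic_arcs rc] by auto
  have below_c: "(c, u) \<in> A\<^sup>*" if "u \<in> NV" "u \<noteq> r" for u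
    using rtrancl_unique_child[OF s reach_from_root[OF that(1)] that(2)] .
  have parents_c: "{u. (u, c) \<in> A} = {r}"
  proof (intro equalityI subsetI)
    fix p assume "p \<in> {u. (u, c) \<in> A}"
    then have pc: "(p, c) \<in> A" by simp
    show "p \<in> {r}"
    proof (rule ccontr)
      assume "p \<notin> {r}"
      then have "(c, p) \<in> A\<^sup>*" using below_c pc arcs by blast
      then show False using acyclic_arc_not_back[OF acyclic_arcs pc] by simp
    qed
  qed (use rc in simp)
  have "c \<notin> X"
  proof
    assume "c \<in> X"
    then have "{w. (c, w) \<in> A} = {}"
      using leaf_iff_outdeg[OF cN] finite_children[of c] unfolding outdeg_def by simp
    then have "NV \<subseteq> {r, c}"
      using below_c by (metis converse_rtranclE empty_iff insertCI mem_Collect_eq subsetI)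
    then have "card X \<le> card {c}" using leaves root_not_leaf by (intro card_mono) auto
    then show False using cX by simp
  qed
  have parents_eq: "{x. (x, u) \<in> ?A} = {x. (x, u) \<in> A}" if "u \<in> ?N" "u \<noteq> c" for u
    using that s arcs by auto
  have children_eq: "{x. (u, x) \<in> ?A} = {x. (u, x) \<in> A}" if "u \<in> ?N" for u
    using that arcs no_arc_into_root by auto
  have anc: "(u, w) \<in> A\<^sup>* \<longleftrightarrow> (u, w) \<in> ?A\<^sup>*" if "u \<noteq> r" "w \<noteq> r" for u w
    by (rule rtrancl_bypass_iff[of _ _ r c c]) (use that cr arcs s no_arc_into_root in auto)
  have "pre_network ?N ?A X c"
  proof
    show "finite ?N" using finite_vertices by simp
    show "acyclic ?A" using acyclic_arcs by (rule acyclic_subset) auto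
    show "c \<in> ?N" using cN cr by simp
    show "indeg ?A c = 0" using parents_c unfolding indeg_def by auto
    show "(c, v) \<in> ?A\<^sup>*" if "v \<in> ?N" for v using below_c anc[of c v] cr that by simp
    show "X \<subseteq> ?N" using leaves root_not_leaf by auto
    show "v \<in> X \<longleftrightarrow> outdeg ?A v = 0" if "v \<in> ?N" for v
      using that children_eq leaf_iff_outdeg unfolding outdeg_def by simp
    show "indeg ?A v = 1" if "v \<in> X" for v
    proof -
      have "v \<in> ?N" "v \<noteq> c" using that leaves \<open>c \<notin> X\<close> root_not_leaf by auto
      then show ?thesis using parents_eq indeg_leaf[OF that] unfolding indeg_def by simp
    qed
    show "indeg ?A v = 1 \<or> indeg ?A v = 2" if "v \<in> ?N" "v \<noteq> c" for v
      using that parents_eq indeg_non_root unfolding indeg_def by simp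
    show "level1_sets ?N ?A"
      using level1_sets_delete_vertex[OF level1_arcs arcs finite_vertices] indeg_le_2 by blast
  qed auto
  moreover have "same_lcas NV A ?N ?A X"
    using same_lcas_delete_vertex[OF acyclic_arcs _ s cN cr] leaves root_not_leaf anc by blast
  ultimately show ?thesis by blast
qed

context
  fixes v q c
  assumes parents_v: "{u. (u, v) \<in> A} = {q}" and children_v: "{w. (v, w) \<in> A} = {c}"
begin

lemma bypassed_vertex:
  shows "(q, v) \<in> A" "(v, c) \<in> A" "q \<in> NV" "c \<in> NV" "v \<in> NV"
    and "q \<noteq> v" "c \<noteq> v" "q \<noteq> c" "v \<notin> X"
proof -
  show qv: "(q, v) \<in> A" and vc: "(v, c) \<in> A" using parents_v children_v by blast+
  then show "q \<in> NV" "v \<in> NV" "c \<in> NV" using arcs by auto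
  show "q \<noteq> v" using acyclic_arc_not_back[OF acyclic_arcs qv] by auto
  show "c \<noteq> v" using acyclic_arc_not_back[OF acyclic_arcs vc] by auto
  show "q \<noteq> c" using acyclic_arc_not_back[OF acyclic_arcs vc] qv by auto
  have "outdeg A v = 1" using children_v unfolding outdeg_def by simp
  then show "v \<notin> X" using leaf_iff_outdeg \<open>v \<in> NV\<close> by auto
qed

lemma not_both_hybrid: "\<not> (hybrid A q \<and> hybrid A c)"
proof -
  have "\<forall>x\<in>NV. (r, x) \<in> A\<^sup>*" using reach_from_root by blast
  then show ?thesis
    by (rule level1_sets_not_both_hybrid[OF level1_arcs arcs acyclic_arcs root _ parents_v children_v])
qed

abbreviation (input) bypass_arcs :: "('v \<times> 'v) set" where
  "bypass_arcs \<equiv> A \<inter> (NV - {v}) \<times> (NV - {v}) \<union> {(q, c)}"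

lemma parents_bypass:
  "u \<in> NV - {v} \<Longrightarrow> {x. (x, u) \<in> bypass_arcs} = {x. (x, u) \<in> A} - {v} \<union> {x. x = q \<and> u = c}"
  using arcs bypassed_vertex(3,6) by auto

lemma children_bypass:
  "u \<in> NV - {v} \<Longrightarrow> {x. (u, x) \<in> bypass_arcs} = {x. (u, x) \<in> A} - {v} \<union> {x. u = q \<and> x = c}"
  using arcs bypassed_vertex(4,7) by auto

lemma indeg_bypass:
  assumes "u \<in> NV - {v}"
  shows "indeg bypass_arcs u \<le> indeg A u" and "u \<noteq> c \<Longrightarrow> indeg bypass_arcs u = indeg A u"
    and "u = c \<Longrightarrow> indeg bypass_arcs u \<ge> 1" and "u = c \<Longrightarrow> c \<in> X \<Longrightarrow> indeg bypass_arcs u = 1"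
proof -
  show eq: "indeg bypass_arcs u = indeg A u" if "u \<noteq> c"
  proof -
    have "v \<notin> {x. (x, u) \<in> A}" using children_v that by blast
    then have "{x. (x, u) \<in> bypass_arcs} = {x. (x, u) \<in> A}" using parents_bypass[OF assms] that by simp
    then show ?thesis unfolding indeg_def by simp
  qed
  have "c \<in> NV - {v}" using bypassed_vertex(4,7) by simp
  then have "{x. (x, c) \<in> bypass_arcs} = {x. (x, c) \<in> A} - {v} \<union> {x. x = q \<and> c = c}"
    by (rule parents_bypass)
  then have c: "{x. (x, c) \<in> bypass_arcs} = insert q ({x. (x, c) \<in> A} - {v})" by blast
  have fin: "finite ({x. (x, c) \<in> A} - {v})" using finite_parents by simp
  have vc: "v \<in> {x. (x, c) \<in> A}" using bypassed_vertex(2) by simp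
  show "indeg bypass_arcs u \<le> indeg A u"
  proof (cases "u = c")
    case True
    have "card (insert q ({x. (x, c) \<in> A} - {v})) \<le> Suc (card ({x. (x, c) \<in> A} - {v}))"
      using fin by (simp add: card_insert_if)
    then show ?thesis using True c card_Suc_Diff1[OF finite_parents vc] unfolding indeg_def by simp
  qed (use eq in simp)
  have "card (insert q ({x. (x, c) \<in> A} - {v})) > 0" using fin by (simp add: card_gt_0_iff)
  then show "u = c \<Longrightarrow> indeg bypass_arcs u \<ge> 1" using c unfolding indeg_def by simp
  assume "u = c" "c \<in> X"
  then have "card {x. (x, c) \<in> A} = 1" using indeg_leaf unfolding indeg_def by simp
  then obtain z where "{x. (x, c) \<in> A} = {z}" by (rule card_1_singletonE)
  then have "{x. (x, c) \<in> A} = {v}" using vc by simp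
  then show "indeg bypass_arcs u = 1" using c \<open>u = c\<close> unfolding indeg_def by simp
qed

lemma outdeg_bypass:
  assumes "u \<in> NV - {v}"
  shows "outdeg bypass_arcs u = 0 \<longleftrightarrow> outdeg A u = 0"
proof (cases "u = q")
  case True
  have "c \<in> {x. (u, x) \<in> bypass_arcs}" "v \<in> {x. (u, x) \<in> A}" using True bypassed_vertex(1) by simp_all
  moreover have "finite {x. (u, x) \<in> bypass_arcs}" using children_bypass[OF assms] finite_children by simp
  ultimately have "card {x. (u, x) \<in> bypass_arcs} > 0" "card {x. (u, x) \<in> A} > 0"
    using finite_children[of u] card_gt_0_iff by blast+
  then show ?thesis unfolding outdeg_def by simp
next
  case False
  have "v \<notin> {x. (u, x) \<in> A}" using parents_v False by blast
  then have "{x. (u, x) \<in> bypass_arcs} = {x. (u, x) \<in> A}" using children_bypass[OF assms] False by simp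
  then show ?thesis unfolding outdeg_def by simp
qed

lemma bypass:
  assumes "v \<noteq> r"
  shows "pre_network (NV - {v}) bypass_arcs X r \<and> same_lcas NV A (NV - {v}) bypass_arcs X"
proof -
  let ?N = "NV - {v}" and ?A = bypass_arcs
  note B = bypassed_vertex
  have qN: "q \<in> ?N" and cN: "c \<in> ?N" and rN: "r \<in> ?N" using B root assms by auto
  have rc: "r \<noteq> c" using B(2) no_arc_into_root by blast
  have "(q, c) \<in> A\<^sup>+" using B(1,2) by (meson trancl.r_into_trancl trancl_into_trancl)
  then have sub: "?A \<subseteq> A\<^sup>+" by auto
  have anc: "(u, w) \<in> A\<^sup>* \<longleftrightarrow> (u, w) \<in> ?A\<^sup>*" if "u \<noteq> v" "w \<noteq> v" for u w
  proof (rule rtrancl_bypass_iff[OF _ _ _ _ B(6) _ that])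
    show "?A \<subseteq> A\<^sup>*" using sub trancl_into_rtrancl by auto
    show "\<forall>x. (x, v) \<in> A \<longrightarrow> x = q" "\<forall>y. (v, y) \<in> A \<longrightarrow> y = c"
      using parents_v children_v by blast+
    show "(q, c) \<in> ?A\<^sup>*" by (rule r_into_rtrancl) simp
    show "\<forall>a b. (a, b) \<in> A \<longrightarrow> a \<noteq> v \<longrightarrow> b \<noteq> v \<longrightarrow> (a, b) \<in> ?A" using arcs by blast
  qed
  have hybrid_bypass: "hybrid ?A u \<longrightarrow> hybrid A u" if "u \<in> ?N" for u
    using indeg_bypass(1,2)[OF that] indeg_le_2[of u] that unfolding hybrid_def
    by (cases "u = c") auto
  have "pre_network ?N ?A X r"
  proof
    show "finite ?N" using finite_vertices by simp
    show "?A \<subseteq> ?N \<times> ?N" using qN cN by auto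
    show "acyclic ?A" unfolding acyclic_def
    proof
      fix x
      show "(x, x) \<notin> ?A\<^sup>+"
      proof
        assume "(x, x) \<in> ?A\<^sup>+"
        then have "(x, x) \<in> (A\<^sup>+)\<^sup>+" using sub by (rule trancl_mono)
        then show False using acyclic_arcs unfolding acyclic_def by simp
      qed
    qed
    show "r \<in> ?N" by (rule rN)
    show "indeg ?A r = 0" using indeg_bypass(2)[OF rN rc] indeg_root by simp
    show "(r, u) \<in> ?A\<^sup>*" if "u \<in> ?N" for u using that anc[of r u] assms reach_from_root by simp
    show "X \<subseteq> ?N" using leaves B(9) by auto
    show "u \<in> X \<longleftrightarrow> outdeg ?A u = 0" if "u \<in> ?N" for u
      using that outdeg_bypass leaf_iff_outdeg by simp
    show "indeg ?A u = 1" if "u \<in> X" for u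
    proof -
      have "u \<in> ?N" using that leaves B(9) by auto
      then show ?thesis using indeg_bypass(2,4) indeg_leaf[OF that] that by (cases "u = c") simp_all
    qed
    show "indeg ?A u = 1 \<or> indeg ?A u = 2" if "u \<in> ?N" "u \<noteq> r" for u
      using indeg_bypass(1-3)[OF that(1)] indeg_le_2[of u] indeg_non_root[of u] that
      by (cases "u = c") auto
    show "level1_sets ?N ?A"
      using level1_sets_bypass[OF level1_arcs arcs B(5-8) B(1,2) _ not_both_hybrid refl]
        hybrid_bypass by blast
  qed
  moreover have "same_lcas NV A ?N ?A X"
    using same_lcas_delete_vertex[OF acyclic_arcs _ children_v B(4) B(7)] leaves B(9) anc by blast
  ultimately show ?thesis by blast
qed

end

end

lemma (in pre_network) network_if_unsuppressible:
  assumes "\<And>v. v \<in> NV \<Longrightarrow> outdeg A v = 1 \<Longrightarrow> v \<noteq> r \<and> indeg A v \<noteq> 1"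
  shows "network NV A X"
  unfolding network_def
proof (intro conjI disjI2)
  show "is_dag NV A" unfolding is_dag_def using finite_vertices arcs acyclic_arcs by simp
  show "X \<subseteq> NV" by (rule leaves)
  show "\<exists>!r'. r' \<in> NV \<and> indeg A r' = 0"
  proof (rule ex1I[of _ r])
    show "r \<in> NV \<and> indeg A r = 0" using root indeg_root by simp
    show "r' = r" if "r' \<in> NV \<and> indeg A r' = 0" for r' using root_unique that by blast
  qed
  show "\<forall>r'\<in>NV. indeg A r' = 0 \<longrightarrow> outdeg A r' \<ge> 2"
  proof (intro ballI impI)
    fix r' assume "r' \<in> NV" "indeg A r' = 0"
    then have "r' = r" by (rule root_unique)
    moreover have "outdeg A r \<noteq> 0" using leaf_iff_outdeg root root_not_leaf by simp
    moreover have "outdeg A r \<noteq> 1" using assms[OF root] by auto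
    ultimately show "outdeg A r' \<ge> 2" by simp
  qed
  show "\<forall>v\<in>NV. v \<in> X \<longleftrightarrow> outdeg A v = 0 \<and> indeg A v = 1"
  proof
    fix v assume "v \<in> NV"
    then show "v \<in> X \<longleftrightarrow> outdeg A v = 0 \<and> indeg A v = 1"
      using leaf_iff_outdeg[of v] indeg_leaf[of v] by auto
  qed
  show "\<forall>v\<in>NV. indeg A v \<noteq> 0 \<and> v \<notin> X \<longrightarrow>
      (indeg A v = 1 \<and> outdeg A v \<ge> 2) \<or> (indeg A v = 2 \<and> outdeg A v \<ge> 1)"
  proof (intro ballI impI)
    fix v assume v: "v \<in> NV" "indeg A v \<noteq> 0 \<and> v \<notin> X"
    then have "v \<noteq> r" using indeg_root by auto
    then have "indeg A v = 1 \<or> indeg A v = 2" using indeg_non_root v(1) by simp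
    moreover have "outdeg A v \<noteq> 0" using leaf_iff_outdeg v by simp
    moreover have "indeg A v = 1 \<longrightarrow> outdeg A v \<noteq> 1" using assms[OF v(1)] by auto
    ultimately show "(indeg A v = 1 \<and> outdeg A v \<ge> 2) \<or> (indeg A v = 2 \<and> outdeg A v \<ge> 1)"
      by auto
  qed
qed

lemma pre_network_suppress:
  assumes "pre_network NV A X r" "2 \<le> card X"
  shows "\<exists>NV' A'. NV' \<subseteq> NV \<and> network NV' A' X \<and> level1 NV' A' \<and> same_lcas NV A NV' A' X"
  using assms(1)
proof (induction "card NV" arbitrary: NV A r rule: less_induct)
  case less
  interpret pre_network NV A X r by (rule less.prems)
  have delete: "\<exists>NV' A'. NV' \<subseteq> NV \<and> network NV' A' X \<and> level1 NV' A' \<and> same_lcas NV A NV' A' X"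
    if reduced: "pre_network (NV - {v}) A1 X r1 \<and> same_lcas NV A (NV - {v}) A1 X" and "v \<in> NV"
    for v A1 r1
  proof -
    have "card (NV - {v}) < card NV" using finite_vertices that(2) by (rule card_Diff1_less)
    from less.hyps[OF this conjunct1[OF reduced]]
    obtain NV' A' where NV': "NV' \<subseteq> NV - {v}" "network NV' A' X" "level1 NV' A'"
        "same_lcas (NV - {v}) A1 NV' A' X"
      by blast
    have "same_lcas NV A NV' A' X" using same_lcas_trans[OF conjunct2[OF reduced] NV'(4)] .
    then show ?thesis using NV'(1-3) by blast
  qed
  show ?case
  proof (cases "\<exists>v\<in>NV. outdeg A v = 1 \<and> (v = r \<or> indeg A v = 1)")
    case True
    then obtain v where v: "v \<in> NV" "outdeg A v = 1" "v = r \<or> indeg A v = 1" by blast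
    obtain c where c: "{w. (v, w) \<in> A} = {c}"
      using v(2) unfolding outdeg_def by (rule card_1_singletonE)
    show ?thesis
    proof (cases "v = r")
      case True
      then have "{w. (r, w) \<in> A} = {c}" using c by simp
      then show ?thesis using delete[OF delete_root[OF assms(2)] root] by simp
    next
      case False
      then have "indeg A v = 1" using v(3) by simp
      then obtain q where q: "{u. (u, v) \<in> A} = {q}" unfolding indeg_def by (rule card_1_singletonE)
      show ?thesis using delete[OF bypass[OF q c False] v(1)] .
    qed
  next
    case False
    have "network NV A X"
    proof (rule network_if_unsuppressible)
      fix v assume "v \<in> NV" "outdeg A v = 1"
      then show "v \<noteq> r \<and> indeg A v \<noteq> 1" using False by blast
    qed
    moreover have "level1 NV A" using level1_arcs by (rule level1_sets_imp_level1)
    ultimately show ?thesis using same_lcas_refl[of NV A X] by blast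
  qed
qed

lemma acyclic_reach_from_unique_source:
  assumes "finite NV" "A \<subseteq> NV \<times> NV" "acyclic A"
    and source: "\<And>u. u \<in> NV \<Longrightarrow> indeg A u = 0 \<Longrightarrow> u = r"
    and "v \<in> NV"
  shows "(r, v) \<in> A\<^sup>*"
proof -
  have "finite A" using assms(1,2) by (meson finite_SigmaI finite_subset)
  then have "wf A" using assms(3) by (rule finite_acyclic_wf)
  have "v \<in> NV \<longrightarrow> (r, v) \<in> A\<^sup>*"
  proof (induction v rule: wf_induct[OF \<open>wf A\<close>])
    case (1 v)
    show ?case
    proof
      assume vN: "v \<in> NV"
      show "(r, v) \<in> A\<^sup>*"
      proof (cases "indeg A v = 0")
        case True
        then show ?thesis using source vN by simp
      next
        case False
        then have "{u. (u, v) \<in> A} \<noteq> {}" unfolding indeg_def by (metis card.empty)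
        then obtain u where uv: "(u, v) \<in> A" by blast
        then have "(r, u) \<in> A\<^sup>*" using 1 assms(2) by blast
        then show ?thesis using uv by (rule rtrancl_into_rtrancl)
      qed
    qed
  qed
  then show ?thesis using assms(5) by blast
qed

lemma network_imp_pre_network:
  assumes N: "network NV A X" and "level1 NV A" and "2 \<le> card X"
  obtains r where "pre_network NV A X r"
proof -
  have dag: "finite NV" "A \<subseteq> NV \<times> NV" "acyclic A" and "X \<subseteq> NV"
    using N unfolding network_def is_dag_def by simp_all
  have nontrivial: "\<not> (\<exists>x. NV = {x} \<and> X = {x})" using \<open>2 \<le> card X\<close> by auto
  have "(\<exists>x. NV = {x} \<and> X = {x}) \<or> ((\<exists>!r. r \<in> NV \<and> indeg A r = 0) \<and>
       (\<forall>r\<in>NV. indeg A r = 0 \<longrightarrow> outdeg A r \<ge> 2) \<and>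
       (\<forall>v\<in>NV. v \<in> X \<longleftrightarrow> outdeg A v = 0 \<and> indeg A v = 1) \<and>
       (\<forall>v\<in>NV. indeg A v \<noteq> 0 \<and> v \<notin> X \<longrightarrow>
           (indeg A v = 1 \<and> outdeg A v \<ge> 2) \<or> (indeg A v = 2 \<and> outdeg A v \<ge> 1)))"
    using N unfolding network_def by (rule conjunct2[OF conjunct2])
  then have conds: "(\<exists>!r. r \<in> NV \<and> indeg A r = 0) \<and>
       (\<forall>r\<in>NV. indeg A r = 0 \<longrightarrow> outdeg A r \<ge> 2) \<and>
       (\<forall>v\<in>NV. v \<in> X \<longleftrightarrow> outdeg A v = 0 \<and> indeg A v = 1) \<and>
       (\<forall>v\<in>NV. indeg A v \<noteq> 0 \<and> v \<notin> X \<longrightarrow>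
           (indeg A v = 1 \<and> outdeg A v \<ge> 2) \<or> (indeg A v = 2 \<and> outdeg A v \<ge> 1))"
    using nontrivial by (elim disjE) simp_all
  obtain r where r: "r \<in> NV \<and> indeg A r = 0" and unique0: "\<forall>u. u \<in> NV \<and> indeg A u = 0 \<longrightarrow> u = r"
    using conjunct1[OF conds] by (rule ex1E)
  have unique: "\<And>u. u \<in> NV \<Longrightarrow> indeg A u = 0 \<Longrightarrow> u = r" using unique0 by blast
  have root_outdeg: "outdeg A r \<ge> 2" using conds r by blast
  have leaf: "\<And>v. v \<in> NV \<Longrightarrow> v \<in> X \<longleftrightarrow> outdeg A v = 0 \<and> indeg A v = 1" using conds by blast
  have inner: "\<And>v. v \<in> NV \<Longrightarrow> indeg A v \<noteq> 0 \<Longrightarrow> v \<notin> X \<Longrightarrow>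
           (indeg A v = 1 \<and> outdeg A v \<ge> 2) \<or> (indeg A v = 2 \<and> outdeg A v \<ge> 1)"
    using conds by blast
  have "pre_network NV A X r"
  proof
    show "(r, v) \<in> A\<^sup>*" if "v \<in> NV" for v
      using acyclic_reach_from_unique_source[OF dag unique that] .
    show "v \<in> X \<longleftrightarrow> outdeg A v = 0" if "v \<in> NV" for v
    proof (cases "indeg A v = 0")
      case True
      then show ?thesis using unique[OF that] root_outdeg leaf[OF that] by auto
    qed (use leaf[OF that] inner[OF that] in auto)
    show "indeg A v = 1" if "v \<in> X" for v using leaf that \<open>X \<subseteq> NV\<close> by blast
    show "indeg A v = 1 \<or> indeg A v = 2" if "v \<in> NV" "v \<noteq> r" for v
      using leaf[OF that(1)] inner[OF that(1)] unique[OF that(1)] that(2) by auto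
    show "level1_sets NV A" using dag(1) \<open>level1 NV A\<close> by (rule level1_imp_level1_sets)
  qed (use dag r \<open>X \<subseteq> NV\<close> in auto)
  then show ?thesis by (rule that)
qed

definition ancestors_of :: "'v set \<Rightarrow> ('v \<times> 'v) set \<Rightarrow> 'v set \<Rightarrow> 'v set" where
  "ancestors_of NV A Y = {u\<in>NV. \<exists>y\<in>Y. (u, y) \<in> A\<^sup>*}"

lemma rtrancl_Restr_parent_closed:
  assumes closed: "\<And>a b. (a, b) \<in> A \<Longrightarrow> b \<in> S \<Longrightarrow> a \<in> S"
    and "(u, w) \<in> A\<^sup>*" "w \<in> S"
  shows "(u, w) \<in> (A \<inter> S \<times> S)\<^sup>*"
proof -
  have "u \<in> S \<and> (u, w) \<in> (A \<inter> S \<times> S)\<^sup>*"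
    using assms(2)
  proof (induction rule: converse_rtrancl_induct)
    case (step a b)
    then have "a \<in> S" using closed by blast
    then have "(a, b) \<in> A \<inter> S \<times> S" using step by blast
    then show ?case using converse_rtrancl_into_rtrancl[OF _ conjunct2[OF step.IH]] \<open>a \<in> S\<close> by blast
  qed (use assms(3) in simp)
  then show ?thesis by simp
qed

context pre_network
begin

lemma ancestors_subset: "ancestors_of NV A Y \<subseteq> NV"
  unfolding ancestors_of_def by blast

lemma subset_ancestors:
  assumes "Y \<subseteq> X"
  shows "Y \<subseteq> ancestors_of NV A Y"
proof
  fix y assume "y \<in> Y"
  moreover have "y \<in> NV" using \<open>y \<in> Y\<close> assms leaves by blast
  ultimately show "y \<in> ancestors_of NV A Y" unfolding ancestors_of_def by blast
qed

lemma ancestors_parent_closed: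
  assumes "(a, b) \<in> A" "b \<in> ancestors_of NV A Y"
  shows "a \<in> ancestors_of NV A Y"
proof -
  obtain y where y: "y \<in> Y" "(b, y) \<in> A\<^sup>*" using assms(2) unfolding ancestors_of_def by blast
  have "(a, y) \<in> A\<^sup>*" using assms(1) y(2) by (rule converse_rtrancl_into_rtrancl)
  moreover have "a \<in> NV" using assms(1) arcs by blast
  ultimately show ?thesis using y(1) unfolding ancestors_of_def by blast
qed

lemma parents_in_ancestors:
  assumes "u \<in> ancestors_of NV A Y"
  shows "{x. (x, u) \<in> A \<inter> ancestors_of NV A Y \<times> ancestors_of NV A Y} = {x. (x, u) \<in> A}"
  using assms ancestors_parent_closed by blast

lemma ancestor_without_children:
  assumes "v \<in> ancestors_of NV A Y"
    and "outdeg (A \<inter> ancestors_of NV A Y \<times> ancestors_of NV A Y) v = 0"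
  shows "v \<in> Y"
proof (rule ccontr)
  let ?S = "ancestors_of NV A Y"
  assume "v \<notin> Y"
  obtain y where y: "y \<in> Y" "(v, y) \<in> A\<^sup>*" using assms(1) unfolding ancestors_of_def by blast
  then have "(v, y) \<in> A\<^sup>+" using \<open>v \<notin> Y\<close> by (metis rtrancl_eq_or_trancl)
  then obtain w where w: "(v, w) \<in> A" "(w, y) \<in> A\<^sup>*" by (meson tranclD)
  then have "w \<in> ?S" using y(1) arcs unfolding ancestors_of_def by blast
  then have "{x. (v, x) \<in> A \<inter> ?S \<times> ?S} \<noteq> {}" using w(1) assms(1) by blast
  moreover have "finite {x. (v, x) \<in> A \<inter> ?S \<times> ?S}"
    using finite_children[of v] by (rule finite_subset[rotated]) auto
  ultimately have "outdeg (A \<inter> ?S \<times> ?S) v \<noteq> 0" unfolding outdeg_def using card_0_eq by blast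
  then show False using assms(2) by simp
qed

lemma ancestors_leaves: "ancestors_of NV A Y \<inter> X \<subseteq> Y"
proof
  let ?S = "ancestors_of NV A Y"
  fix v assume v: "v \<in> ?S \<inter> X"
  then have no_children: "{w. (v, w) \<in> A \<inter> ?S \<times> ?S} = {}" using leaf_no_children by blast
  have "outdeg (A \<inter> ?S \<times> ?S) v = 0" unfolding outdeg_def no_children by simp
  then show "v \<in> Y" using ancestor_without_children v by blast
qed

lemma pre_network_ancestors:
  assumes Y: "Y \<subseteq> X" "Y \<noteq> {}"
  shows "pre_network (ancestors_of NV A Y) (A \<inter> ancestors_of NV A Y \<times> ancestors_of NV A Y) Y r"
proof
  let ?S = "ancestors_of NV A Y" let ?AS = "A \<inter> ?S \<times> ?S"
  have SN: "?S \<subseteq> NV" by (rule ancestors_subset)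
  have YS: "Y \<subseteq> ?S" using Y(1) by (rule subset_ancestors)
  show "finite ?S" using finite_vertices SN by (rule finite_subset[rotated])
  show "?AS \<subseteq> ?S \<times> ?S" by blast
  show "acyclic ?AS" using acyclic_arcs by (rule acyclic_subset) blast
  show "r \<in> ?S"
  proof -
    obtain y where "y \<in> Y" using Y(2) by blast
    then have "(r, y) \<in> A\<^sup>*" using Y(1) leaves reach_from_root by blast
    then show ?thesis using \<open>y \<in> Y\<close> root unfolding ancestors_of_def by blast
  qed
  then show "indeg ?AS r = 0" using parents_in_ancestors indeg_root unfolding indeg_def by simp
  show "(r, v) \<in> ?AS\<^sup>*" if "v \<in> ?S" for v
  proof -
    have "v \<in> NV" using that SN by blast
    then show ?thesis
      using rtrancl_Restr_parent_closed[OF ancestors_parent_closed reach_from_root that] by simp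
  qed
  show "Y \<subseteq> ?S" by (rule YS)
  show "v \<in> Y \<longleftrightarrow> outdeg ?AS v = 0" if "v \<in> ?S" for v
  proof
    assume "v \<in> Y"
    then have no_children: "{w. (v, w) \<in> ?AS} = {}" using Y(1) leaf_no_children by blast
    show "outdeg ?AS v = 0" unfolding outdeg_def no_children by simp
  qed (use ancestor_without_children that in blast)
  show "indeg ?AS v = 1" if "v \<in> Y" for v
  proof -
    have "v \<in> ?S" "v \<in> X" using that YS Y(1) by blast+
    then show ?thesis using parents_in_ancestors indeg_leaf unfolding indeg_def by simp
  qed
  show "indeg ?AS v = 1 \<or> indeg ?AS v = 2" if "v \<in> ?S" "v \<noteq> r" for v
  proof -
    have "v \<in> NV" using that SN by blast
    then show ?thesis
      using parents_in_ancestors[OF that(1)] indeg_non_root that(2) unfolding indeg_def by simp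
  qed
  show "level1_sets ?S ?AS"
  proof (rule level1_sets_subgraph[OF level1_arcs SN])
    show "\<forall>x\<in>?S. \<forall>y\<in>?S. (x, y) \<in> undirected ?AS \<longleftrightarrow> (x, y) \<in> undirected A"
      unfolding undirected_def by blast
    show "\<forall>v\<in>?S. hybrid ?AS v \<longrightarrow> hybrid A v"
      using parents_in_ancestors unfolding hybrid_def indeg_def by simp
  qed
qed

lemma same_lcas_ancestors:
  assumes "Y \<subseteq> X"
  shows "same_lcas NV A (ancestors_of NV A Y) (A \<inter> ancestors_of NV A Y \<times> ancestors_of NV A Y) Y"
proof -
  let ?S = "ancestors_of NV A Y" let ?AS = "A \<inter> ?S \<times> ?S"
  show ?thesis
  proof (rule same_lcas_restrict[OF acyclic_arcs ancestors_subset subset_ancestors[OF assms]])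
    show "\<forall>u\<in>?S. \<forall>w\<in>?S. (u, w) \<in> A\<^sup>* \<longleftrightarrow> (u, w) \<in> ?AS\<^sup>*"
    proof (intro ballI iffI)
      fix u w assume "u \<in> ?S" "w \<in> ?S" "(u, w) \<in> A\<^sup>*"
      show "(u, w) \<in> ?AS\<^sup>*"
        using rtrancl_Restr_parent_closed[OF ancestors_parent_closed \<open>(u, w) \<in> A\<^sup>*\<close> \<open>w \<in> ?S\<close>] .
    next
      fix u w assume "(u, w) \<in> ?AS\<^sup>*"
      moreover have "?AS\<^sup>* \<subseteq> A\<^sup>*" by (rule rtrancl_mono) blast
      ultimately show "(u, w) \<in> A\<^sup>*" by blast
    qed
    show "\<forall>w\<in>NV - ?S. \<forall>x\<in>Y. \<forall>y\<in>Y. common_ancestor NV A x y w \<longrightarrow>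
        (\<exists>w'\<in>?S. (w, w') \<in> A\<^sup>* \<and> common_ancestor NV A x y w')"
    proof (intro ballI impI)
      fix w x y assume "w \<in> NV - ?S" "x \<in> Y" "common_ancestor NV A x y w"
      then have "w \<in> ?S" unfolding ancestors_of_def common_ancestor_def ancestor_def by blast
      then show "\<exists>w'\<in>?S. (w, w') \<in> A\<^sup>* \<and> common_ancestor NV A x y w'"
        using \<open>w \<in> NV - ?S\<close> by blast
    qed
  qed
qed

end

lemma level1_explainable_singleton:
  assumes "irrefl E"
  shows "level1_explainable {a} (induced_subgraph_edges E {a})"
proof -
  have "network {0::nat} {} {0}" unfolding network_def is_dag_def by (simp add: acyclic_def)
  moreover have "level1 {0::nat} {}" unfolding level1_def
  proof (intro allI impI)
    fix C :: "nat set" assume "biconnected_component {0} (undirected {}) C"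
    then have "C \<subseteq> {0}" "2 \<le> card C" unfolding biconnected_component_def biconnected_on_def by auto
    then show "card {v\<in>C. hybrid {} v} \<le> 1" using card_mono[of "{0::nat}" C] by simp
  qed
  moreover have "labeling {0::nat} {0} (\<lambda>_. Odot)" unfolding labeling_def by simp
  moreover have "explains {0::nat} {} {0} (\<lambda>_. Odot) {a} (induced_subgraph_edges E {a})"
    unfolding explains_def
  proof (intro exI conjI)
    show "bij_betw (\<lambda>_. 0::nat) {a} {0}" unfolding bij_betw_def by simp
    show "\<forall>x\<in>{a}. \<forall>y\<in>{a}. (x, y) \<in> induced_subgraph_edges E {a} \<longleftrightarrow>
        (0::nat) \<noteq> 0 \<and> Odot = One"
      using assms unfolding induced_subgraph_edges_def irrefl_def by simp
  qed
  ultimately show ?thesis unfolding level1_explainable_def by blast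
qed

lemma level1_explainable_induced_subgraph:
  assumes "level1_explainable V E" "W \<subseteq> V" "2 \<le> card W"
  shows "level1_explainable W (induced_subgraph_edges E W)"
proof -
  obtain NV :: "nat set" and A X t
    where N: "network NV A X" "level1 NV A" "labeling NV X t" "explains NV A X t V E"
    using assms(1) unfolding level1_explainable_def by blast
  obtain f where f: "bij_betw f V X"
    "\<forall>a\<in>V. \<forall>b\<in>V. (a, b) \<in> E \<longleftrightarrow> f a \<noteq> f b \<and> t (lca NV A (f a) (f b)) = One"
    using N(4) unfolding explains_def by blast
  define Y where "Y = f ` W"
  have inj: "inj_on f W" using f(1) assms(2) bij_betw_imp_inj_on inj_on_subset by blast
  have YX: "Y \<subseteq> X" using f(1) assms(2) bij_betw_imp_surj_on unfolding Y_def by blast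
  have cY: "2 \<le> card Y" using card_image[OF inj] assms(3) unfolding Y_def by simp
  have "2 \<le> card X"
    using cY card_mono[OF _ YX] N(1) unfolding network_def is_dag_def by (meson finite_subset le_trans)
  then obtain r where "pre_network NV A X r" by (rule network_imp_pre_network[OF N(1,2)])
  then interpret pre_network NV A X r .
  define S where "S = ancestors_of NV A Y"
  have "Y \<noteq> {}" using cY by auto
  then have R: "pre_network S (A \<inter> S \<times> S) Y r" "same_lcas NV A S (A \<inter> S \<times> S) Y" "S \<inter> X \<subseteq> Y"
    using pre_network_ancestors[OF YX] same_lcas_ancestors[OF YX] ancestors_leaves
    unfolding S_def by blast+
  obtain NV' A' where C: "NV' \<subseteq> S" "network NV' A' Y" "level1 NV' A'"
    "same_lcas S (A \<inter> S \<times> S) NV' A' Y"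
    using pre_network_suppress[OF R(1) cY] by blast
  have lcas: "same_lcas NV A NV' A' Y" using same_lcas_trans[OF R(2) C(4)] .
  have SN: "S \<subseteq> NV" unfolding S_def by (rule ancestors_subset)
  have "labeling NV' Y t" unfolding labeling_def
  proof
    fix v assume "v \<in> NV'"
    then have "v \<in> S" "v \<in> NV" using C(1) SN by blast+
    then show "t v = Odot \<longleftrightarrow> v \<in> Y" using N(3) YX R(3) unfolding labeling_def by blast
  qed
  moreover have "explains NV' A' Y t W (induced_subgraph_edges E W)"
    unfolding explains_def
  proof (intro exI conjI ballI)
    show "bij_betw f W Y" unfolding Y_def bij_betw_def using inj by simp
    fix a b assume ab: "a \<in> W" "b \<in> W"
    then have "lca NV' A' (f a) (f b) = lca NV A (f a) (f b)"
      using same_lcas_lca_eq[OF lcas] unfolding Y_def by simp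
    then show "(a, b) \<in> induced_subgraph_edges E W \<longleftrightarrow> f a \<noteq> f b \<and> t (lca NV' A' (f a) (f b)) = One"
      using ab assms(2) f(2) unfolding induced_subgraph_edges_def by auto
  qed
  ultimately show ?thesis using C(2,3) unfolding level1_explainable_def by blast
qed

theorem mainTheorem17:
  fixes V :: "'a set" and E :: "('a \<times> 'a) set"
  assumes "simple_graph V E" and "V \<noteq> {}"
  shows "level1_explainable V E \<longleftrightarrow>
    (\<forall>W. W \<subseteq> V \<and> W \<noteq> {} \<longrightarrow> level1_explainable W (induced_subgraph_edges E W))"
proof
  assume explainable: "level1_explainable V E"
  have "finite V" "irrefl E" using assms(1) unfolding simple_graph_def by simp_all
  show "\<forall>W. W \<subseteq> V \<and> W \<noteq> {} \<longrightarrow> level1_explainable W (induced_subgraph_edges E W)"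
  proof (intro allI impI)
    fix W assume W: "W \<subseteq> V \<and> W \<noteq> {}"
    then have "card W \<noteq> 0" using \<open>finite V\<close> finite_subset by fastforce
    then consider "card W = 1" | "2 \<le> card W" by linarith
    then show "level1_explainable W (induced_subgraph_edges E W)"
    proof cases
      case 1
      then obtain a where "W = {a}" by (rule card_1_singletonE)
      then show ?thesis using level1_explainable_singleton[OF \<open>irrefl E\<close>] by simp
    next
      case 2
      then show ?thesis using level1_explainable_induced_subgraph[OF explainable] W by blast
    qed
  qed
next
  assume "\<forall>W. W \<subseteq> V \<and> W \<noteq> {} \<longrightarrow> level1_explainable W (induced_subgraph_edges E W)"
  then have "level1_explainable V (induced_subgraph_edges E V)" using assms(2) by blast
  moreover have "induced_subgraph_edges E V = E"
    using assms(1) unfolding simple_graph_def induced_subgraph_edges_def by blast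
  ultimately show "level1_explainable V E" by simp
qed

end
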